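(* Let $\mathbb{C}$ be a regular category. The following are equivalent: (i) $\mathbb{C}$ is a majority category. (ii) For any three reflexive relations $A,B,C$ on any object $X$, $(A\circ B)\cap(A\circ C)\leqslant A\circ(B\cap C)$. (iii) For any three reflexive relations $A,B,C$ on any object $X$, $A\cap(B\circ C)\leqslant (A\cap B)\circ(A\cap C)$. (iv) For any equivalence relations $\alpha,\beta,\gamma$ on any object $X$, $\alpha\cap(\beta\circ\gamma)=(\alpha\cap\beta)\circ(\alpha\cap\gamma)$. (v) For any effective equivalence relations $\alpha,\beta,\gamma$ on any object $X$, $\alpha\cap(\beta\circ\gamma)=(\alpha\cap\beta)\circ(\alpha\cap\gamma)$.
   Context: A category is regular if it has finite limits and coequalizers of kernel pairs and regular epimorphisms are pullback-stable; morphisms factor as regular epi followed by mono (image factorization). Relations on $X$ are subobjects of $X\times X$; reflexive if the diagonal factors through them; $\cap$ is intersection of subobjects (pullback). For $x:S\to X$ and a subobject $A$ of $X$, $x\in_S A$ means $x$ factors through a representative of $A$. The composite $R\circ S$ of relations $R$ (represented by $(r_1,r_2):R_0\to X\times Y$) and $S$ (represented by $(s_1,s_2):S_0\to Y\times Z$) is the image of $(r_1p_1,s_2p_2):P\to X\times Z$ where $(P,p_1,p_2)$ is the pullback of $s_1$ along $r_2$. An equivalence relation is effective if it is the kernel pair of some morphism. A ternary relation $R\leqslant X\times Y\times Z$ is majority-selecting if for all $S$ and $x,x':S\to X$, $y,y':S\to Y$, $z,z':S\to Z$: $(x,y,z')\in_S R$, $(x,y',z)\in_S R$, $(x',y,z)\in_S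 R$ imply $(x,y,z)\in_S R$; $\mathbb{C}$ is a majority category if every ternary relation in it is majority-selecting. *)

theory Defs
  imports Main
begin

record ('o,'a) cat =
  Ob :: "'o set"
  Ar :: "'a set"
  Dom :: "'a \<Rightarrow> 'o"
  Cod :: "'a \<Rightarrow> 'o"
  Id :: "'o \<Rightarrow> 'a"
  Comp :: "'a \<Rightarrow> 'a \<Rightarrow> 'a"   (* Comp C g f = g o f *)

definition hom :: "('o,'a,'m) cat_scheme \<Rightarrow> 'o \<Rightarrow> 'o \<Rightarrow> 'a set" where
  "hom C X Y = {f \<in> Ar C. Dom C f = X \<and> Cod C f = Y}"

definition category :: "('o,'a,'m) cat_scheme \<Rightarrow> bool" where
  "category C \<longleftrightarrow>
     (\<forall>f\<in>Ar C. Dom C f \<in> Ob C \<and> Cod C f \<in> Ob C) \<and>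
     (\<forall>X\<in>Ob C. Id C X \<in> hom C X X) \<and>
     (\<forall>f\<in>Ar C. \<forall>g\<in>Ar C. Cod C f = Dom C g \<longrightarrow> Comp C g f \<in> hom C (Dom C f) (Cod C g)) \<and>
     (\<forall>f\<in>Ar C. Comp C f (Id C (Dom C f)) = f \<and> Comp C (Id C (Cod C f)) f = f) \<and>
     (\<forall>f\<in>Ar C. \<forall>g\<in>Ar C. \<forall>h\<in>Ar C. Cod C f = Dom C g \<longrightarrow> Cod C g = Dom C h \<longrightarrow>
        Comp C h (Comp C g f) = Comp C (Comp C h g) f)"

definition mono :: "('o,'a,'m) cat_scheme \<Rightarrow> 'a \<Rightarrow> bool" where
  "mono C m \<longleftrightarrow> m \<in> Ar C \<and>
     (\<forall>S\<in>Ob C. \<forall>u\<in>hom C S (Dom C m). \<forall>v\<in>hom C S (Dom C m).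
        Comp C m u = Comp C m v \<longrightarrow> u = v)"

definition is_pullback :: "('o,'a,'m) cat_scheme \<Rightarrow> 'a \<Rightarrow> 'a \<Rightarrow> 'a \<Rightarrow> 'a \<Rightarrow> bool" where
  "is_pullback C f g p q \<longleftrightarrow>
     f \<in> Ar C \<and> g \<in> Ar C \<and> Cod C f = Cod C g \<and>
     p \<in> hom C (Dom C p) (Dom C f) \<and> q \<in> hom C (Dom C p) (Dom C g) \<and>
     Comp C f p = Comp C g q \<and>
     (\<forall>S\<in>Ob C. \<forall>p'\<in>hom C S (Dom C f). \<forall>q'\<in>hom C S (Dom C g).
        Comp C f p' = Comp C g q' \<longrightarrow>
        (\<exists>u\<in>hom C S (Dom C p). Comp C p u = p' \<and> Comp C q u = q' \<and>
           (\<forall>v\<in>hom C S (Dom C p). Comp C p v = p' \<and> Comp C q v = q' \<longrightarrow> v = u)))"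

definition is_terminal :: "('o,'a,'m) cat_scheme \<Rightarrow> 'o \<Rightarrow> bool" where
  "is_terminal C T \<longleftrightarrow> T \<in> Ob C \<and> (\<forall>X\<in>Ob C. \<exists>f\<in>hom C X T. \<forall>g\<in>hom C X T. g = f)"

definition is_product :: "('o,'a,'m) cat_scheme \<Rightarrow> 'o \<Rightarrow> 'o \<Rightarrow> 'a \<Rightarrow> 'a \<Rightarrow> bool" where
  "is_product C X Y p1 p2 \<longleftrightarrow>
     p1 \<in> hom C (Dom C p1) X \<and> p2 \<in> hom C (Dom C p1) Y \<and>
     (\<forall>S\<in>Ob C. \<forall>f\<in>hom C S X. \<forall>g\<in>hom C S Y.
        (\<exists>u\<in>hom C S (Dom C p1). Comp C p1 u = f \<and> Comp C p2 u = g \<and>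
           (\<forall>v\<in>hom C S (Dom C p1). Comp C p1 v = f \<and> Comp C p2 v = g \<longrightarrow> v = u)))"

definition is_equalizer :: "('o,'a,'m) cat_scheme \<Rightarrow> 'a \<Rightarrow> 'a \<Rightarrow> 'a \<Rightarrow> bool" where
  "is_equalizer C f g e \<longleftrightarrow>
     f \<in> Ar C \<and> g \<in> hom C (Dom C f) (Cod C f) \<and> e \<in> hom C (Dom C e) (Dom C f) \<and>
     Comp C f e = Comp C g e \<and>
     (\<forall>S\<in>Ob C. \<forall>h\<in>hom C S (Dom C f). Comp C f h = Comp C g h \<longrightarrow>
        (\<exists>u\<in>hom C S (Dom C e). Comp C e u = h \<and>
           (\<forall>v\<in>hom C S (Dom C e). Comp C e v = h \<longrightarrow> v = u)))"

definition has_finite_limits :: "('o,'a,'m) cat_scheme \<Rightarrow> bool" where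
  "has_finite_limits C \<longleftrightarrow>
     (\<exists>T. is_terminal C T) \<and>
     (\<forall>X\<in>Ob C. \<forall>Y\<in>Ob C. \<exists>p1 p2. is_product C X Y p1 p2) \<and>
     (\<forall>f\<in>Ar C. \<forall>g\<in>hom C (Dom C f) (Cod C f). \<exists>e. is_equalizer C f g e)"

definition is_coequalizer :: "('o,'a,'m) cat_scheme \<Rightarrow> 'a \<Rightarrow> 'a \<Rightarrow> 'a \<Rightarrow> bool" where
  "is_coequalizer C f g c \<longleftrightarrow>
     f \<in> Ar C \<and> g \<in> hom C (Dom C f) (Cod C f) \<and> c \<in> hom C (Cod C f) (Cod C c) \<and>
     Comp C c f = Comp C c g \<and>
     (\<forall>Z\<in>Ob C. \<forall>h\<in>hom C (Cod C f) Z. Comp C h f = Comp C h g \<longrightarrow>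
        (\<exists>u\<in>hom C (Cod C c) Z. Comp C u c = h \<and>
           (\<forall>v\<in>hom C (Cod C c) Z. Comp C v c = h \<longrightarrow> v = u)))"

definition regular_epi :: "('o,'a,'m) cat_scheme \<Rightarrow> 'a \<Rightarrow> bool" where
  "regular_epi C e \<longleftrightarrow> (\<exists>f g. is_coequalizer C f g e)"

definition regular_category :: "('o,'a,'m) cat_scheme \<Rightarrow> bool" where
  "regular_category C \<longleftrightarrow>
     category C \<and> has_finite_limits C \<and>
     (\<forall>f\<in>Ar C. \<forall>p q. is_pullback C f f p q \<longrightarrow> (\<exists>c. is_coequalizer C p q c)) \<and>
     (\<forall>e f p q. regular_epi C e \<and> is_pullback C e f p q \<longrightarrow> regular_epi C q) \<and>
     (\<forall>f\<in>Ar C. \<exists>e m. regular_epi C e \<and> mono C m \<and> Cod C e = Dom C m \<and>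
        Dom C e = Dom C f \<and> Cod C m = Cod C f \<and> Comp C m e = f)"

section \<open>Relations, represented as jointly monic spans (= subobjects of products)\<close>

definition jmono2 :: "('o,'a,'m) cat_scheme \<Rightarrow> 'a \<Rightarrow> 'a \<Rightarrow> bool" where
  "jmono2 C r1 r2 \<longleftrightarrow> r1 \<in> Ar C \<and> r2 \<in> Ar C \<and> Dom C r1 = Dom C r2 \<and>
     (\<forall>S\<in>Ob C. \<forall>u\<in>hom C S (Dom C r1). \<forall>v\<in>hom C S (Dom C r1).
        Comp C r1 u = Comp C r1 v \<and> Comp C r2 u = Comp C r2 v \<longrightarrow> u = v)"

definition jmono3 :: "('o,'a,'m) cat_scheme \<Rightarrow> 'a \<Rightarrow> 'a \<Rightarrow> 'a \<Rightarrow> bool" where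
  "jmono3 C r1 r2 r3 \<longleftrightarrow> r1 \<in> Ar C \<and> r2 \<in> Ar C \<and> r3 \<in> Ar C \<and>
     Dom C r1 = Dom C r2 \<and> Dom C r1 = Dom C r3 \<and>
     (\<forall>S\<in>Ob C. \<forall>u\<in>hom C S (Dom C r1). \<forall>v\<in>hom C S (Dom C r1).
        Comp C r1 u = Comp C r1 v \<and> Comp C r2 u = Comp C r2 v \<and> Comp C r3 u = Comp C r3 v
        \<longrightarrow> u = v)"

definition is_rel :: "('o,'a,'m) cat_scheme \<Rightarrow> 'o \<Rightarrow> 'o \<Rightarrow> 'a \<times> 'a \<Rightarrow> bool" where
  "is_rel C X Y R \<longleftrightarrow> jmono2 C (fst R) (snd R) \<and> Cod C (fst R) = X \<and> Cod C (snd R) = Y"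

definition rel_le :: "('o,'a,'m) cat_scheme \<Rightarrow> 'a \<times> 'a \<Rightarrow> 'a \<times> 'a \<Rightarrow> bool" where
  "rel_le C R S \<longleftrightarrow> (\<exists>h\<in>hom C (Dom C (fst R)) (Dom C (fst S)).
      Comp C (fst S) h = fst R \<and> Comp C (snd S) h = snd R)"

definition is_meet :: "('o,'a,'m) cat_scheme \<Rightarrow> 'o \<Rightarrow> 'o \<Rightarrow> 'a \<times> 'a \<Rightarrow> 'a \<times> 'a \<Rightarrow> 'a \<times> 'a \<Rightarrow> bool" where
  "is_meet C X Y A B M \<longleftrightarrow> is_rel C X Y M \<and> rel_le C M A \<and> rel_le C M B \<and>
     (\<forall>U. is_rel C X Y U \<and> rel_le C U A \<and> rel_le C U B \<longrightarrow> rel_le C U M)"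

definition is_image2 :: "('o,'a,'m) cat_scheme \<Rightarrow> 'a \<Rightarrow> 'a \<Rightarrow> 'a \<times> 'a \<Rightarrow> bool" where
  "is_image2 C f g M \<longleftrightarrow> jmono2 C (fst M) (snd M) \<and>
     (\<exists>e. regular_epi C e \<and> Dom C e = Dom C f \<and> Dom C e = Dom C g \<and>
        Cod C e = Dom C (fst M) \<and> Comp C (fst M) e = f \<and> Comp C (snd M) e = g)"

text \<open>Composite R o S (R from X to Y, S from Y to Z): image of (r1 p1, s2 p2), where
  (P,p1,p2) is the pullback of s1 along r2.\<close>
definition is_rcomp :: "('o,'a,'m) cat_scheme \<Rightarrow> 'a \<times> 'a \<Rightarrow> 'a \<times> 'a \<Rightarrow> 'a \<times> 'a \<Rightarrow> bool" where
  "is_rcomp C R S T \<longleftrightarrow> (\<exists>p1 p2. is_pullback C (snd R) (fst S) p1 p2 \<and>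
      is_image2 C (Comp C (fst R) p1) (Comp C (snd S) p2) T)"

definition reflexive_rel :: "('o,'a,'m) cat_scheme \<Rightarrow> 'o \<Rightarrow> 'a \<times> 'a \<Rightarrow> bool" where
  "reflexive_rel C X R \<longleftrightarrow> is_rel C X X R \<and>
     (\<exists>h\<in>hom C X (Dom C (fst R)). Comp C (fst R) h = Id C X \<and> Comp C (snd R) h = Id C X)"

definition equiv_rel :: "('o,'a,'m) cat_scheme \<Rightarrow> 'o \<Rightarrow> 'a \<times> 'a \<Rightarrow> bool" where
  "equiv_rel C X R \<longleftrightarrow> reflexive_rel C X R \<and>
     rel_le C (snd R, fst R) R \<and>
     (\<forall>T. is_rcomp C R R T \<longrightarrow> rel_le C T R)"

definition effective_equiv_rel :: "('o,'a,'m) cat_scheme \<Rightarrow> 'o \<Rightarrow> 'a \<times> 'a \<Rightarrow> bool" where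
  "effective_equiv_rel C X R \<longleftrightarrow> equiv_rel C X R \<and>
     (\<exists>f\<in>Ar C. is_pullback C f f (fst R) (snd R))"

definition is_rel3 :: "('o,'a,'m) cat_scheme \<Rightarrow> 'o \<Rightarrow> 'o \<Rightarrow> 'o \<Rightarrow> 'a \<times> 'a \<times> 'a \<Rightarrow> bool" where
  "is_rel3 C X Y Z R \<longleftrightarrow> (case R of (r1, r2, r3) \<Rightarrow>
     jmono3 C r1 r2 r3 \<and> Cod C r1 = X \<and> Cod C r2 = Y \<and> Cod C r3 = Z)"

definition mem3 :: "('o,'a,'m) cat_scheme \<Rightarrow> 'a \<Rightarrow> 'a \<Rightarrow> 'a \<Rightarrow> 'a \<times> 'a \<times> 'a \<Rightarrow> bool" where
  "mem3 C x y z R \<longleftrightarrow> (case R of (r1, r2, r3) \<Rightarrow>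
     (\<exists>h\<in>hom C (Dom C x) (Dom C r1).
        Comp C r1 h = x \<and> Comp C r2 h = y \<and> Comp C r3 h = z))"

definition majority_selecting ::
  "('o,'a,'m) cat_scheme \<Rightarrow> 'o \<Rightarrow> 'o \<Rightarrow> 'o \<Rightarrow> 'a \<times> 'a \<times> 'a \<Rightarrow> bool" where
  "majority_selecting C X Y Z R \<longleftrightarrow>
     (\<forall>S\<in>Ob C. \<forall>x\<in>hom C S X. \<forall>x'\<in>hom C S X. \<forall>y\<in>hom C S Y. \<forall>y'\<in>hom C S Y.
        \<forall>z\<in>hom C S Z. \<forall>z'\<in>hom C S Z.
        mem3 C x y z' R \<and> mem3 C x y' z R \<and> mem3 C x' y z R \<longrightarrow> mem3 C x y z R)"

definition majority_category :: "('o,'a,'m) cat_scheme \<Rightarrow> bool" where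
  "majority_category C \<longleftrightarrow>
     (\<forall>X\<in>Ob C. \<forall>Y\<in>Ob C. \<forall>Z\<in>Ob C. \<forall>R. is_rel3 C X Y Z R \<longrightarrow> majority_selecting C X Y Z R)"

definition cond_ii :: "('o,'a,'m) cat_scheme \<Rightarrow> bool" where
  "cond_ii C \<longleftrightarrow> (\<forall>X\<in>Ob C. \<forall>A B D. reflexive_rel C X A \<and> reflexive_rel C X B \<and> reflexive_rel C X D \<longrightarrow>
     (\<forall>AB AD M BD R. is_rcomp C A B AB \<and> is_rcomp C A D AD \<and> is_meet C X X AB AD M \<and>
        is_meet C X X B D BD \<and> is_rcomp C A BD R \<longrightarrow> rel_le C M R))"

definition cond_iii :: "('o,'a,'m) cat_scheme \<Rightarrow> bool" where
  "cond_iii C \<longleftrightarrow> (\<forall>X\<in>Ob C. \<forall>A B D. reflexive_rel C X A \<and> reflexive_rel C X B \<and> reflexive_rel C X D \<longrightarrow>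
     (\<forall>BD M AB AD R. is_rcomp C B D BD \<and> is_meet C X X A BD M \<and>
        is_meet C X X A B AB \<and> is_meet C X X A D AD \<and> is_rcomp C AB AD R \<longrightarrow> rel_le C M R))"

definition distrib_for :: "('o,'a,'m) cat_scheme \<Rightarrow> ('o \<Rightarrow> 'a \<times> 'a \<Rightarrow> bool) \<Rightarrow> bool" where
  "distrib_for C P \<longleftrightarrow> (\<forall>X\<in>Ob C. \<forall>a b c. P X a \<and> P X b \<and> P X c \<longrightarrow>
     (\<forall>bc M ab ac R. is_rcomp C b c bc \<and> is_meet C X X a bc M \<and>
        is_meet C X X a b ab \<and> is_meet C X X a c ac \<and> is_rcomp C ab ac R \<longrightarrow>
        rel_le C M R \<and> rel_le C R M))"

definition cond_iv :: "('o,'a,'m) cat_scheme \<Rightarrow> bool" where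
  "cond_iv C \<longleftrightarrow> distrib_for C (equiv_rel C)"

definition cond_v :: "('o,'a,'m) cat_scheme \<Rightarrow> bool" where
  "cond_v C \<longleftrightarrow> distrib_for C (effective_equiv_rel C)"

end

theory Submission
  imports Defs
begin

text \<open>
  Relations are handled through generalized elements; membership in a composite is only
  witnessed locally, i.e. after precomposing with a regular epimorphism, which is harmless
  because membership descends along regular epimorphisms.

  A majority category satisfies (ii) and (iii): the data witnessing membership in the left-hand
  side provide three elements of a ternary relation of the form
  \<open>{(a, b, c) | \<exists>w. a R\<^sub>1 w \<and> w R\<^sub>2 b \<and> w R\<^sub>3 c}\<close>, and majority-selection produces the
  middle point required by the right-hand side. Conversely, let \<open>R \<le> X \<times> Y \<times> Z\<close> and let
  \<open>a, b, c\<close> be the kernel pairs of its three projections, effective equivalence relations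
  on \<open>R\<close>. Elements \<open>h\<^sub>1, h\<^sub>2, h\<^sub>3\<close> of \<open>R\<close> witnessing \<open>(x, y, z')\<close>, \<open>(x, y', z)\<close>,
  \<open>(x', y, z)\<close> satisfy \<open>h\<^sub>1 a h\<^sub>2\<close>, \<open>h\<^sub>1 b h\<^sub>3\<close> and \<open>h\<^sub>3 c h\<^sub>2\<close>, and (ii) or (v) yields,
  locally, an element of \<open>R\<close> with coordinates \<open>(x, y, z)\<close>. Finally (iii) implies (iv) because
  the reverse inclusion holds for all equivalence relations, and (iv) trivially implies (v).
\<close>

locale regular_cat =
  fixes C :: "('o,'a,'m) cat_scheme"
  assumes reg: "regular_category C"
begin

abbreviation cmp :: "'a \<Rightarrow> 'a \<Rightarrow> 'a" (infixr "\<cdot>" 55) where "g \<cdot> f \<equiv> Comp C g f"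

lemma cat: "category C" using reg unfolding regular_category_def by blast

lemma hom_iff: "f \<in> hom C X Y \<longleftrightarrow> f \<in> Ar C \<and> Dom C f = X \<and> Cod C f = Y"
  unfolding hom_def by blast

lemma ar_dom[simp]: "f \<in> Ar C \<Longrightarrow> Dom C f \<in> Ob C"
  using cat unfolding category_def by blast
lemma ar_cod[simp]: "f \<in> Ar C \<Longrightarrow> Cod C f \<in> Ob C"
  using cat unfolding category_def by blast
lemma id_ar[simp]: "X \<in> Ob C \<Longrightarrow> Id C X \<in> Ar C"
  and dom_id[simp]: "X \<in> Ob C \<Longrightarrow> Dom C (Id C X) = X"
  and cod_id[simp]: "X \<in> Ob C \<Longrightarrow> Cod C (Id C X) = X"
  using cat unfolding category_def hom_def by blast+
lemma comp_ar[simp]: "f \<in> Ar C \<Longrightarrow> g \<in> Ar C \<Longrightarrow> Cod C f = Dom C g \<Longrightarrow> g \<cdot> f \<in> Ar C"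
  and dom_comp[simp]: "f \<in> Ar C \<Longrightarrow> g \<in> Ar C \<Longrightarrow> Cod C f = Dom C g \<Longrightarrow> Dom C (g \<cdot> f) = Dom C f"
  and cod_comp[simp]: "f \<in> Ar C \<Longrightarrow> g \<in> Ar C \<Longrightarrow> Cod C f = Dom C g \<Longrightarrow> Cod C (g \<cdot> f) = Cod C g"
  using cat unfolding category_def hom_def by blast+
lemma assoc_left[simp]: "f \<in> Ar C \<Longrightarrow> g \<in> Ar C \<Longrightarrow> h \<in> Ar C \<Longrightarrow> Cod C f = Dom C g \<Longrightarrow> Cod C g = Dom C h
   \<Longrightarrow> h \<cdot> (g \<cdot> f) = (h \<cdot> g) \<cdot> f"
  using cat unfolding category_def by metis
lemma assoc: "f \<in> Ar C \<Longrightarrow> g \<in> Ar C \<Longrightarrow> h \<in> Ar C \<Longrightarrow> Cod C f = Dom C g \<Longrightarrow> Cod C g = Dom C h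
   \<Longrightarrow> (h \<cdot> g) \<cdot> f = h \<cdot> (g \<cdot> f)"
  using cat unfolding category_def by metis
lemma id_r[simp]: "f \<in> Ar C \<Longrightarrow> Dom C f = X \<Longrightarrow> f \<cdot> Id C X = f"
  using cat unfolding category_def by blast
lemma id_l[simp]: "f \<in> Ar C \<Longrightarrow> Cod C f = X \<Longrightarrow> Id C X \<cdot> f = f"
  using cat unfolding category_def by blast

lemma hom_ob: "f \<in> hom C X Y \<Longrightarrow> X \<in> Ob C \<and> Y \<in> Ob C"
  by (metis hom_iff ar_dom ar_cod)

lemma ar_hom: "f \<in> Ar C \<Longrightarrow> f \<in> hom C (Dom C f) (Cod C f)"
  by (simp add: hom_iff)

lemma comp_hom[intro]: "f \<in> hom C X Y \<Longrightarrow> g \<in> hom C Y Z \<Longrightarrow> g \<cdot> f \<in> hom C X Z"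
  by (simp add: hom_iff)

lemma assoc_hom: "f \<in> hom C X Y \<Longrightarrow> g \<in> hom C Y Z \<Longrightarrow> h \<in> hom C Z W \<Longrightarrow> (h \<cdot> g) \<cdot> f = h \<cdot> (g \<cdot> f)"
  unfolding hom_iff by (metis assoc)

lemma product_ex: "X \<in> Ob C \<Longrightarrow> Y \<in> Ob C \<Longrightarrow> \<exists>p1 p2. is_product C X Y p1 p2"
  using reg unfolding regular_category_def has_finite_limits_def by blast

lemma product_hom: "is_product C X Y p1 p2 \<Longrightarrow> p1 \<in> hom C (Dom C p1) X \<and> p2 \<in> hom C (Dom C p1) Y"
  unfolding is_product_def by blast

lemma product_pair: "is_product C X Y p1 p2 \<Longrightarrow> f \<in> hom C S X \<Longrightarrow> g \<in> hom C S Y \<Longrightarrow>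
   \<exists>u\<in>hom C S (Dom C p1). p1 \<cdot> u = f \<and> p2 \<cdot> u = g"
  unfolding is_product_def by (metis hom_iff ar_dom)

lemma product_uniq: "is_product C X Y p1 p2 \<Longrightarrow> u \<in> hom C S (Dom C p1) \<Longrightarrow> v \<in> hom C S (Dom C p1) \<Longrightarrow>
   p1 \<cdot> u = p1 \<cdot> v \<Longrightarrow> p2 \<cdot> u = p2 \<cdot> v \<Longrightarrow> u = v"
proof -
  assume P: "is_product C X Y p1 p2" and u: "u \<in> hom C S (Dom C p1)" and v: "v \<in> hom C S (Dom C p1)"
    and e: "p1 \<cdot> u = p1 \<cdot> v" "p2 \<cdot> u = p2 \<cdot> v"
  have S: "S \<in> Ob C" using u hom_ob by blast
  have "p1 \<cdot> u \<in> hom C S X" "p2 \<cdot> u \<in> hom C S Y" using u product_hom[OF P] by auto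
  then obtain w where w: "w \<in> hom C S (Dom C p1)" "\<forall>v\<in>hom C S (Dom C p1). p1 \<cdot> v = p1 \<cdot> u \<and> p2 \<cdot> v = p2 \<cdot> u \<longrightarrow> v = w"
    using P S unfolding is_product_def by blast
  then show "u = v" using u v e by metis
qed

lemma equalizer_ex: "f \<in> Ar C \<Longrightarrow> g \<in> hom C (Dom C f) (Cod C f) \<Longrightarrow> \<exists>e. is_equalizer C f g e"
  using reg unfolding regular_category_def has_finite_limits_def by blast

lemma equalizer_facts: assumes "is_equalizer C f g e"
  shows "f \<in> Ar C" "g \<in> hom C (Dom C f) (Cod C f)" "e \<in> hom C (Dom C e) (Dom C f)" "f \<cdot> e = g \<cdot> e"
  using assms unfolding is_equalizer_def by blast+

lemma equalizer_univ: assumes "is_equalizer C f g e" "h \<in> hom C S (Dom C f)" "f \<cdot> h = g \<cdot> h"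
  shows "\<exists>u\<in>hom C S (Dom C e). e \<cdot> u = h \<and> (\<forall>v\<in>hom C S (Dom C e). e \<cdot> v = h \<longrightarrow> v = u)"
proof -
  have "S \<in> Ob C" using assms(2) hom_ob by blast
  then show ?thesis using assms unfolding is_equalizer_def by blast
qed

lemma pullback_facts: assumes "is_pullback C f g p q"
  shows "f \<in> Ar C" "g \<in> Ar C" "Cod C f = Cod C g" "p \<in> hom C (Dom C p) (Dom C f)"
    "q \<in> hom C (Dom C p) (Dom C g)" "f \<cdot> p = g \<cdot> q"
  using assms unfolding is_pullback_def by blast+

lemma pullback_univ: "is_pullback C f g p q \<Longrightarrow> p' \<in> hom C S (Dom C f) \<Longrightarrow> q' \<in> hom C S (Dom C g) \<Longrightarrow>
   f \<cdot> p' = g \<cdot> q' \<Longrightarrow> \<exists>u\<in>hom C S (Dom C p). p \<cdot> u = p' \<and> q \<cdot> u = q'"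
  unfolding is_pullback_def by (metis hom_iff ar_dom)

lemma pullback_uniq: assumes P: "is_pullback C f g p q" and u: "u \<in> hom C S (Dom C p)" and v: "v \<in> hom C S (Dom C p)"
    and e: "p \<cdot> u = p \<cdot> v" "q \<cdot> u = q \<cdot> v" shows "u = v"
proof -
  have S: "S \<in> Ob C" using u hom_ob by blast
  have h: "p \<in> hom C (Dom C p) (Dom C f)" "q \<in> hom C (Dom C p) (Dom C g)" "f \<cdot> p = g \<cdot> q"
    using pullback_facts[OF P] by auto
  have "p \<cdot> u \<in> hom C S (Dom C f)" "q \<cdot> u \<in> hom C S (Dom C g)" using u h by auto
  moreover have "f \<cdot> (p \<cdot> u) = g \<cdot> (q \<cdot> u)"
    using assoc_hom[OF u h(1) ar_hom[OF pullback_facts(1)[OF P]]] assoc_hom[OF u h(2) ar_hom[OF pullback_facts(2)[OF P]]] h(3) by simp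
  ultimately obtain w where "w \<in> hom C S (Dom C p)" "\<forall>v\<in>hom C S (Dom C p). p \<cdot> v = p \<cdot> u \<and> q \<cdot> v = q \<cdot> u \<longrightarrow> v = w"
    using P S unfolding is_pullback_def by blast
  then show ?thesis using u v e by metis
qed

lemma pullback_ex: assumes f: "f \<in> Ar C" and g: "g \<in> Ar C" and fg: "Cod C f = Cod C g"
  shows "\<exists>p q. is_pullback C f g p q"
proof -
  obtain p1 p2 where P: "is_product C (Dom C f) (Dom C g) p1 p2" using product_ex ar_dom f g by blast
  let ?P = "Dom C p1"
  have h1: "p1 \<in> hom C ?P (Dom C f)" "p2 \<in> hom C ?P (Dom C g)" using product_hom[OF P] by auto
  have a: "f \<cdot> p1 \<in> Ar C" "g \<cdot> p2 \<in> hom C (Dom C (f \<cdot> p1)) (Cod C (f \<cdot> p1))"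
    using h1 f g fg by (auto simp: hom_iff)
  obtain e where E: "is_equalizer C (f \<cdot> p1) (g \<cdot> p2) e" using equalizer_ex[OF a] by blast
  have eh: "e \<in> hom C (Dom C e) ?P" "(f \<cdot> p1) \<cdot> e = (g \<cdot> p2) \<cdot> e"
  proof -
    have d1: "Dom C (f \<cdot> p1) = ?P" using h1 f by (simp add: hom_iff)
    show "e \<in> hom C (Dom C e) ?P" using equalizer_facts(3)[OF E] d1 by simp
    show "(f \<cdot> p1) \<cdot> e = (g \<cdot> p2) \<cdot> e" using equalizer_facts(4)[OF E] .
  qed
  show ?thesis
  proof (intro exI)
    show "is_pullback C f g (p1 \<cdot> e) (p2 \<cdot> e)"
      unfolding is_pullback_def
    proof (intro conjI ballI impI)
      show "f \<in> Ar C" "g \<in> Ar C" "Cod C f = Cod C g" by fact+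
      show "p1 \<cdot> e \<in> hom C (Dom C (p1 \<cdot> e)) (Dom C f)" "p2 \<cdot> e \<in> hom C (Dom C (p1 \<cdot> e)) (Dom C g)"
        using eh h1 by (auto simp: hom_iff)
      show "f \<cdot> p1 \<cdot> e = g \<cdot> p2 \<cdot> e"
        using assoc_hom[OF eh(1) h1(1) ar_hom[OF f]] assoc_hom[OF eh(1) h1(2) ar_hom[OF g]] eh(2) by simp
    next
      fix S p' q' assume S: "S \<in> Ob C" and p': "p' \<in> hom C S (Dom C f)" and q': "q' \<in> hom C S (Dom C g)"
        and pq: "f \<cdot> p' = g \<cdot> q'"
      obtain u where u: "u \<in> hom C S ?P" "p1 \<cdot> u = p'" "p2 \<cdot> u = q'" using product_pair[OF P p' q'] by blast
      have "(f \<cdot> p1) \<cdot> u = (g \<cdot> p2) \<cdot> u"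
        using assoc_hom[OF u(1) h1(1) ar_hom[OF f]] assoc_hom[OF u(1) h1(2) ar_hom[OF g]] u pq by simp
      moreover have "u \<in> hom C S (Dom C (f \<cdot> p1))" using u h1 f by (auto simp: hom_iff)
      ultimately obtain w where w: "w \<in> hom C S (Dom C e)" "e \<cdot> w = u"
        "\<forall>v\<in>hom C S (Dom C e). e \<cdot> v = u \<longrightarrow> v = w"
        using equalizer_univ[OF E] by blast
      have de: "Dom C (p1 \<cdot> e) = Dom C e" using eh h1 by (auto simp: hom_iff)
      show "\<exists>u\<in>hom C S (Dom C (p1 \<cdot> e)). (p1 \<cdot> e) \<cdot> u = p' \<and> (p2 \<cdot> e) \<cdot> u = q' \<and>
          (\<forall>v\<in>hom C S (Dom C (p1 \<cdot> e)). (p1 \<cdot> e) \<cdot> v = p' \<and> (p2 \<cdot> e) \<cdot> v = q' \<longrightarrow> v = u)"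
      proof (rule bexI[of _ w], intro conjI ballI impI)
        show "w \<in> hom C S (Dom C (p1 \<cdot> e))" using w(1) de by simp
        show "(p1 \<cdot> e) \<cdot> w = p'" "(p2 \<cdot> e) \<cdot> w = q'"
          using assoc_hom[OF w(1) eh(1) h1(1)] assoc_hom[OF w(1) eh(1) h1(2)] w(1,2) u by simp_all
      next
        fix v assume v: "v \<in> hom C S (Dom C (p1 \<cdot> e))" "(p1 \<cdot> e) \<cdot> v = p' \<and> (p2 \<cdot> e) \<cdot> v = q'"
        have v': "v \<in> hom C S (Dom C e)" using v de by simp
        have "e \<cdot> v = u"
          by (rule product_uniq[OF P]) (use v' u eh h1 v assoc_hom[OF v' eh(1) h1(1)] assoc_hom[OF v' eh(1) h1(2)] in \<open>auto\<close>)
        then show "v = w" using w v' by blast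
      qed
    qed
  qed
qed

lemma coequalizer_facts: assumes "is_coequalizer C f g c"
  shows "f \<in> Ar C" "g \<in> hom C (Dom C f) (Cod C f)" "c \<in> hom C (Cod C f) (Cod C c)" "c \<cdot> f = c \<cdot> g"
  using assms unfolding is_coequalizer_def by blast+

lemma coequalizer_univ: assumes "is_coequalizer C f g c" "h \<in> hom C (Cod C f) Z" "h \<cdot> f = h \<cdot> g"
  shows "\<exists>u\<in>hom C (Cod C c) Z. u \<cdot> c = h \<and> (\<forall>v\<in>hom C (Cod C c) Z. v \<cdot> c = h \<longrightarrow> v = u)"
proof -
  have "Z \<in> Ob C" using assms(2) hom_ob by blast
  then show ?thesis using assms unfolding is_coequalizer_def by blast
qed

lemma regular_epi_ar: "regular_epi C e \<Longrightarrow> e \<in> Ar C"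
  unfolding regular_epi_def is_coequalizer_def hom_def by blast

lemma regular_epi_cancel: assumes e: "regular_epi C e" and a: "a \<in> hom C (Cod C e) Z" and b: "b \<in> hom C (Cod C e) Z"
  and ab: "a \<cdot> e = b \<cdot> e" shows "a = b"
proof -
  obtain f g where E: "is_coequalizer C f g e" using e unfolding regular_epi_def by blast
  note F = coequalizer_facts[OF E]
  have h: "a \<cdot> e \<in> hom C (Cod C f) Z" using F a by (auto simp: hom_iff)
  have "(a \<cdot> e) \<cdot> f = (a \<cdot> e) \<cdot> g" using F a by (auto simp: hom_iff assoc simp del: assoc_left)
  then obtain u where u: "u\<in>hom C (Cod C e) Z" "\<forall>v\<in>hom C (Cod C e) Z. v \<cdot> e = a \<cdot> e \<longrightarrow> v = u"
    using coequalizer_univ[OF E h] by blast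
  show ?thesis using u(2) a b ab by metis
qed

lemma regular_epi_descend: assumes e: "regular_epi C e" and h: "h \<in> hom C (Dom C e) Z"
  and H: "\<And>T u v. u \<in> hom C T (Dom C e) \<Longrightarrow> v \<in> hom C T (Dom C e) \<Longrightarrow> e \<cdot> u = e \<cdot> v \<Longrightarrow> h \<cdot> u = h \<cdot> v"
  shows "\<exists>k\<in>hom C (Cod C e) Z. k \<cdot> e = h"
proof -
  obtain f g where E: "is_coequalizer C f g e" using e unfolding regular_epi_def by blast
  note F = coequalizer_facts[OF E]
  have de: "Dom C e = Cod C f" using F by (simp add: hom_iff)
  have "f \<in> hom C (Dom C f) (Dom C e)" "g \<in> hom C (Dom C f) (Dom C e)" using F de by (auto simp: hom_iff)
  then have "h \<cdot> f = h \<cdot> g" using H F(4) by blast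
  then show ?thesis using coequalizer_univ[OF E, of h Z] h de by auto
qed

lemma regular_epi_pullback_stable: assumes e: "regular_epi C e" and k: "k \<in> Ar C" and ke: "Cod C k = Cod C e"
  shows "\<exists>q l. regular_epi C q \<and> q \<in> hom C (Dom C q) (Dom C k) \<and> l \<in> hom C (Dom C q) (Dom C e) \<and> e \<cdot> l = k \<cdot> q"
proof -
  obtain l q where P: "is_pullback C e k l q" using pullback_ex[OF regular_epi_ar[OF e] k] ke by metis
  have "regular_epi C q" using reg P e unfolding regular_category_def by blast
  moreover note pullback_facts[OF P]
  moreover have "Dom C q = Dom C l" using pullback_facts(5)[OF P] by (simp add: hom_iff)
  ultimately show ?thesis by (intro exI[of _ q] exI[of _ l]) auto
qed

lemma image_factorization: "f \<in> Ar C \<Longrightarrow> \<exists>e m. regular_epi C e \<and> mono C m \<and> Cod C e = Dom C m \<and> Dom C e = Dom C f \<and> Cod C m = Cod C f \<and> m \<cdot> e = f"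
  using reg unfolding regular_category_def by blast

lemma mono_cancel: "mono C m \<Longrightarrow> u \<in> hom C S (Dom C m) \<Longrightarrow> v \<in> hom C S (Dom C m) \<Longrightarrow> m \<cdot> u = m \<cdot> v \<Longrightarrow> u = v"
  unfolding mono_def using hom_ob by blast

subsection \<open>Relations and generalized elements\<close>

definition mem2 :: "'a \<times> 'a \<Rightarrow> 'a \<Rightarrow> 'a \<Rightarrow> bool" where
  "mem2 R f g \<longleftrightarrow> (\<exists>h\<in>hom C (Dom C f) (Dom C (fst R)). fst R \<cdot> h = f \<and> snd R \<cdot> h = g)"

lemma rel_le_iff_mem2: "rel_le C R S \<longleftrightarrow> mem2 S (fst R) (snd R)"
  unfolding rel_le_def mem2_def by simp

lemma rel_facts: assumes "is_rel C X Y R"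
  shows "fst R \<in> hom C (Dom C (fst R)) X" "snd R \<in> hom C (Dom C (fst R)) Y"
  using assms unfolding is_rel_def jmono2_def hom_iff by auto

lemma rel_cancel: assumes "is_rel C X Y R" "u \<in> hom C S (Dom C (fst R))" "v \<in> hom C S (Dom C (fst R))"
  "fst R \<cdot> u = fst R \<cdot> v" "snd R \<cdot> u = snd R \<cdot> v" shows "u = v"
proof -
  have "S \<in> Ob C" using assms(2) hom_ob by blast
  then show ?thesis using assms unfolding is_rel_def jmono2_def by blast
qed

lemma mem2_I: assumes "is_rel C X Y R" "h \<in> hom C W (Dom C (fst R))" "fst R \<cdot> h = f" "snd R \<cdot> h = g"
  shows "mem2 R f g"
proof -
  have "Dom C f = W" using assms rel_facts[OF assms(1)] by (auto simp: hom_iff)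
  then show ?thesis using assms unfolding mem2_def by blast
qed

lemma mem2_E: assumes "mem2 R f g"
  obtains h where "h \<in> hom C (Dom C f) (Dom C (fst R))" "fst R \<cdot> h = f" "snd R \<cdot> h = g"
  using assms unfolding mem2_def by blast

lemma mem2_E_dom: assumes "mem2 R f g" "Dom C f = W"
  obtains h where "h \<in> hom C W (Dom C (fst R))" "fst R \<cdot> h = f" "snd R \<cdot> h = g"
  using assms unfolding mem2_def by blast

lemma mem2_hom: assumes "is_rel C X Y R" "mem2 R f g"
  shows "f \<in> hom C (Dom C f) X" "g \<in> hom C (Dom C f) Y"
proof -
  obtain h where h: "h \<in> hom C (Dom C f) (Dom C (fst R))" "fst R \<cdot> h = f" "snd R \<cdot> h = g"
    using assms(2) by (rule mem2_E)
  show "f \<in> hom C (Dom C f) X" "g \<in> hom C (Dom C f) Y"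
    using h rel_facts[OF assms(1)] by (auto simp: hom_iff)
qed

lemma mem2_precomp: assumes R: "is_rel C X Y R" and m: "mem2 R f g" and t: "t \<in> hom C W (Dom C f)"
  shows "mem2 R (f \<cdot> t) (g \<cdot> t)"
proof -
  obtain h where h: "h \<in> hom C (Dom C f) (Dom C (fst R))" "fst R \<cdot> h = f" "snd R \<cdot> h = g"
    using m by (rule mem2_E)
  show ?thesis
    by (rule mem2_I[OF R, of "h \<cdot> t" W]) (use h t rel_facts[OF R] in \<open>auto simp: hom_iff\<close>)
qed

lemma mem2_generic: assumes R: "is_rel C X Y R" shows "mem2 R (fst R) (snd R)"
  by (rule mem2_I[OF R, of "Id C (Dom C (fst R))" "Dom C (fst R)"]) (use rel_facts[OF R] in \<open>auto simp: hom_iff\<close>)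

lemma mem2_rel_le: assumes R: "is_rel C X Y R" and S: "is_rel C X Y S" and le: "rel_le C R S" and m: "mem2 R f g"
  shows "mem2 S f g"
proof -
  obtain h where h: "h \<in> hom C (Dom C f) (Dom C (fst R))" "fst R \<cdot> h = f" "snd R \<cdot> h = g"
    using m by (rule mem2_E)
  obtain k where k: "k \<in> hom C (Dom C (fst R)) (Dom C (fst S))" "fst S \<cdot> k = fst R" "snd S \<cdot> k = snd R"
    using le unfolding rel_le_iff_mem2 by (rule mem2_E)
  show ?thesis
    by (rule mem2_I[OF S, of "k \<cdot> h" "Dom C f"]) (use h k rel_facts[OF R] rel_facts[OF S] in \<open>auto simp: hom_iff\<close>)
qed

lemma mem2_descend: assumes R: "is_rel C X Y R" and q: "regular_epi C q" and f: "f \<in> hom C (Cod C q) X"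
  and g: "g \<in> hom C (Cod C q) Y" and m: "mem2 R (f \<cdot> q) (g \<cdot> q)"
  shows "mem2 R f g"
proof -
  note RF = rel_facts[OF R]
  have qa: "q \<in> hom C (Dom C q) (Cod C q)" using regular_epi_ar[OF q] by (simp add: hom_iff)
  have dfq: "Dom C (f \<cdot> q) = Dom C q" using qa f by (auto simp: hom_iff)
  obtain h where h: "h \<in> hom C (Dom C q) (Dom C (fst R))" "fst R \<cdot> h = f \<cdot> q" "snd R \<cdot> h = g \<cdot> q"
    using m dfq by (metis mem2_E)
  have "\<exists>k\<in>hom C (Cod C q) (Dom C (fst R)). k \<cdot> q = h"
  proof (rule regular_epi_descend[OF q h(1)])
    fix T u v assume u: "u \<in> hom C T (Dom C q)" and v: "v \<in> hom C T (Dom C q)" and uv: "q \<cdot> u = q \<cdot> v"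
    have "fst R \<cdot> (h \<cdot> u) = f \<cdot> (q \<cdot> u)" "fst R \<cdot> (h \<cdot> v) = f \<cdot> (q \<cdot> v)"
      "snd R \<cdot> (h \<cdot> u) = g \<cdot> (q \<cdot> u)" "snd R \<cdot> (h \<cdot> v) = g \<cdot> (q \<cdot> v)"
      using h u v qa f g RF by (auto simp: hom_iff)
    then show "h \<cdot> u = h \<cdot> v"
      using rel_cancel[OF R, of "h \<cdot> u" T "h \<cdot> v"] uv h u v by auto
  qed
  then obtain k where k: "k \<in> hom C (Cod C q) (Dom C (fst R))" "k \<cdot> q = h" by blast
  have "(fst R \<cdot> k) \<cdot> q = f \<cdot> q" "(snd R \<cdot> k) \<cdot> q = g \<cdot> q"
    using k h qa RF by (auto simp: hom_iff assoc simp del: assoc_left)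
  then have "fst R \<cdot> k = f" "snd R \<cdot> k = g"
    using regular_epi_cancel[OF q, of "fst R \<cdot> k" X f] regular_epi_cancel[OF q, of "snd R \<cdot> k" Y g] k f g RF by auto
  then show ?thesis using mem2_I[OF R k(1)] by blast
qed

lemma reflexive_rel_is_rel: "reflexive_rel C X A \<Longrightarrow> is_rel C X X A"
  unfolding reflexive_rel_def by blast

lemma reflexive_mem2: assumes A: "reflexive_rel C X A" and u: "u \<in> hom C W X" shows "mem2 A u u"
proof -
  have R: "is_rel C X X A" using A unfolding reflexive_rel_def by blast
  obtain h where h: "h \<in> hom C X (Dom C (fst A))" "fst A \<cdot> h = Id C X" "snd A \<cdot> h = Id C X"
    using A unfolding reflexive_rel_def by blast
  have "fst A \<cdot> (h \<cdot> u) = u" "snd A \<cdot> (h \<cdot> u) = u" using h u rel_facts[OF R] by (auto simp: hom_iff)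
  moreover have "h \<cdot> u \<in> hom C W (Dom C (fst A))" using h u by auto
  ultimately show ?thesis using mem2_I[OF R] by blast
qed

lemma image2_facts: assumes M: "is_image2 C f g M" and f: "f \<in> hom C P X" and g: "g \<in> hom C P Y"
  obtains e where "regular_epi C e" "e \<in> hom C P (Dom C (fst M))" "fst M \<cdot> e = f" "snd M \<cdot> e = g"
    "is_rel C X Y M"
proof -
  obtain e where e: "regular_epi C e" "Dom C e = Dom C f" "Dom C e = Dom C g"
     "Cod C e = Dom C (fst M)" "fst M \<cdot> e = f" "snd M \<cdot> e = g" and J: "jmono2 C (fst M) (snd M)"
    using M unfolding is_image2_def by blast
  have ea: "e \<in> Ar C" using regular_epi_ar[OF e(1)] .
  have "is_rel C X Y M" unfolding is_rel_def
  proof (intro conjI)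
    show "jmono2 C (fst M) (snd M)" by fact
    have "fst M \<in> Ar C" "snd M \<in> Ar C" "Dom C (snd M) = Dom C (fst M)" using J unfolding jmono2_def by auto
    then show "Cod C (fst M) = X" "Cod C (snd M) = Y" using e ea f g by (auto simp: hom_iff)
  qed
  moreover have "e \<in> hom C P (Dom C (fst M))" using e ea f by (auto simp: hom_iff)
  ultimately show ?thesis using that e by blast
qed

lemma image2_intro: assumes M: "is_image2 C f g M" and f: "f \<in> hom C P X" and g: "g \<in> hom C P Y"
  and t: "t \<in> hom C W P" shows "mem2 M (f \<cdot> t) (g \<cdot> t)"
proof -
  obtain e where e: "regular_epi C e" "e \<in> hom C P (Dom C (fst M))" "fst M \<cdot> e = f" "snd M \<cdot> e = g"
    and R: "is_rel C X Y M" using image2_facts[OF M f g] by blast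
  show ?thesis
    by (rule mem2_I[OF R, of "e \<cdot> t" W]) (use e t rel_facts[OF R] in \<open>auto simp: hom_iff\<close>)
qed

lemma image2_elim: assumes M: "is_image2 C f g M" and f: "f \<in> hom C P X" and g: "g \<in> hom C P Y"
  and m: "mem2 M a b" and a: "a \<in> hom C W X"
  shows "\<exists>q l. regular_epi C q \<and> q \<in> hom C (Dom C q) W \<and> l \<in> hom C (Dom C q) P \<and> f \<cdot> l = a \<cdot> q \<and> g \<cdot> l = b \<cdot> q"
proof -
  obtain e where e: "regular_epi C e" "e \<in> hom C P (Dom C (fst M))" "fst M \<cdot> e = f" "snd M \<cdot> e = g"
    and R: "is_rel C X Y M" using image2_facts[OF M f g] by blast
  note RF = rel_facts[OF R]
  have da: "Dom C a = W" using a by (simp add: hom_iff)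
  obtain k where k: "k \<in> hom C W (Dom C (fst M))" "fst M \<cdot> k = a" "snd M \<cdot> k = b"
    using m da by (rule mem2_E_dom)
  have ka: "k \<in> Ar C" "Cod C k = Cod C e" using k e by (auto simp: hom_iff)
  obtain q l where ql: "regular_epi C q" "q \<in> hom C (Dom C q) (Dom C k)" "l \<in> hom C (Dom C q) (Dom C e)" "e \<cdot> l = k \<cdot> q"
    using regular_epi_pullback_stable[OF e(1) ka] by blast
  have "f \<cdot> l = fst M \<cdot> (k \<cdot> q)" "g \<cdot> l = snd M \<cdot> (k \<cdot> q)"
    using e ql RF k by (auto simp: hom_iff assoc simp del: assoc_left)
  then have "f \<cdot> l = a \<cdot> q" "g \<cdot> l = b \<cdot> q"
    using ql k RF by (auto simp: hom_iff)
  moreover have "q \<in> hom C (Dom C q) W" "l \<in> hom C (Dom C q) P" using ql k e a by (auto simp: hom_iff)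
  ultimately show ?thesis using ql(1) by blast
qed

lemma image2_least: assumes M: "is_image2 C f g M" and f: "f \<in> hom C P X" and g: "g \<in> hom C P Y"
  and R: "is_rel C X Y R" and m: "mem2 R f g" shows "rel_le C M R"
proof -
  obtain e where e: "regular_epi C e" "e \<in> hom C P (Dom C (fst M))" "fst M \<cdot> e = f" "snd M \<cdot> e = g"
    and RM: "is_rel C X Y M" using image2_facts[OF M f g] by blast
  note RF = rel_facts[OF R] and MF = rel_facts[OF RM]
  have dfP: "Dom C f = P" using f by (simp add: hom_iff)
  obtain h where h: "h \<in> hom C P (Dom C (fst R))" "fst R \<cdot> h = f" "snd R \<cdot> h = g"
    using m dfP by (metis mem2_E)
  have de: "Dom C e = P" using e by (simp add: hom_iff)
  have "\<exists>k\<in>hom C (Cod C e) (Dom C (fst R)). k \<cdot> e = h"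
  proof (rule regular_epi_descend[OF e(1)])
    show "h \<in> hom C (Dom C e) (Dom C (fst R))" using h de by simp
    fix T u v assume u: "u \<in> hom C T (Dom C e)" and v: "v \<in> hom C T (Dom C e)" and uv: "e \<cdot> u = e \<cdot> v"
    have "fst R \<cdot> (h \<cdot> u) = fst M \<cdot> (e \<cdot> u)" "fst R \<cdot> (h \<cdot> v) = fst M \<cdot> (e \<cdot> v)"
      "snd R \<cdot> (h \<cdot> u) = snd M \<cdot> (e \<cdot> u)" "snd R \<cdot> (h \<cdot> v) = snd M \<cdot> (e \<cdot> v)"
      using h u v e RF MF de by (auto simp: hom_iff)
    then show "h \<cdot> u = h \<cdot> v"
      using rel_cancel[OF R, of "h \<cdot> u" T "h \<cdot> v"] uv h u v de by auto
  qed
  then obtain k where k: "k \<in> hom C (Cod C e) (Dom C (fst R))" "k \<cdot> e = h" by blast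
  have ce: "Cod C e = Dom C (fst M)" using e by (simp add: hom_iff)
  have "(fst R \<cdot> k) \<cdot> e = fst M \<cdot> e" "(snd R \<cdot> k) \<cdot> e = snd M \<cdot> e"
    using k h e RF by (auto simp: hom_iff assoc simp del: assoc_left)
  then have "fst R \<cdot> k = fst M" "snd R \<cdot> k = snd M"
    using regular_epi_cancel[OF e(1), of "fst R \<cdot> k" X "fst M"] regular_epi_cancel[OF e(1), of "snd R \<cdot> k" Y "snd M"] k RF MF ce
    by (auto simp: hom_iff)
  then show ?thesis unfolding rel_le_def using k ce by auto
qed

lemma image2_ex: assumes f: "f \<in> hom C P X" and g: "g \<in> hom C P Y" shows "\<exists>M. is_image2 C f g M"
proof -
  obtain p1 p2 where Pr: "is_product C X Y p1 p2" using product_ex f g hom_ob by blast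
  note PF = product_hom[OF Pr]
  define Q where "Q = Dom C p1"
  have PF': "p1 \<in> hom C Q X" "p2 \<in> hom C Q Y" using PF Q_def by auto
  obtain u where u: "u \<in> hom C P Q" "p1 \<cdot> u = f" "p2 \<cdot> u = g" using product_pair[OF Pr f g] Q_def by blast
  obtain e m where em: "regular_epi C e" "mono C m" "Cod C e = Dom C m" "Dom C e = Dom C u" "Cod C m = Cod C u" "m \<cdot> e = u"
    using image_factorization[of u] u by (auto simp: hom_iff)
  define K where "K = Dom C m"
  have ea: "e \<in> hom C P K" using regular_epi_ar[OF em(1)] em(3,4) u(1) K_def by (simp add: hom_iff)
  have ma: "m \<in> hom C K Q" using em(2,5) u(1) K_def unfolding mono_def by (simp add: hom_iff)
  have me: "m \<cdot> e = u" by fact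
  have "is_image2 C f g (p1 \<cdot> m, p2 \<cdot> m)" unfolding is_image2_def
  proof (intro conjI)
    have dm: "Dom C (p1 \<cdot> m) = K" using PF' ma by (auto simp: hom_iff)
    show "jmono2 C (fst (p1 \<cdot> m, p2 \<cdot> m)) (snd (p1 \<cdot> m, p2 \<cdot> m))" unfolding jmono2_def fst_conv snd_conv
    proof (intro conjI ballI impI)
      show "p1 \<cdot> m \<in> Ar C" "p2 \<cdot> m \<in> Ar C" "Dom C (p1 \<cdot> m) = Dom C (p2 \<cdot> m)"
        using PF' ma by (auto simp: hom_iff)
      fix S x y assume x: "x \<in> hom C S (Dom C (p1 \<cdot> m))" and y: "y \<in> hom C S (Dom C (p1 \<cdot> m))"
        and xy: "(p1 \<cdot> m) \<cdot> x = (p1 \<cdot> m) \<cdot> y \<and> (p2 \<cdot> m) \<cdot> x = (p2 \<cdot> m) \<cdot> y"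
      have x': "x \<in> hom C S K" and y': "y \<in> hom C S K" using x y dm by auto
      have "p1 \<cdot> (m \<cdot> x) = p1 \<cdot> (m \<cdot> y)" "p2 \<cdot> (m \<cdot> x) = p2 \<cdot> (m \<cdot> y)"
        using xy x' y' PF' ma by (simp_all add: hom_iff)
      moreover have "m \<cdot> x \<in> hom C S Q" "m \<cdot> y \<in> hom C S Q" using x' y' ma by auto
      ultimately have "m \<cdot> x = m \<cdot> y"
        using product_uniq[OF Pr, of "m \<cdot> x" S "m \<cdot> y"] Q_def by simp
      then show "x = y" using mono_cancel[OF em(2), of x S y] x' y' K_def by simp
    qed
    show "\<exists>e'. regular_epi C e' \<and> Dom C e' = Dom C f \<and> Dom C e' = Dom C g \<and>
        Cod C e' = Dom C (fst (p1 \<cdot> m, p2 \<cdot> m)) \<and> fst (p1 \<cdot> m, p2 \<cdot> m) \<cdot> e' = f \<and> snd (p1 \<cdot> m, p2 \<cdot> m) \<cdot> e' = g"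
    proof (rule exI[of _ e], intro conjI)
      show "regular_epi C e" by fact
      show "Dom C e = Dom C f" "Dom C e = Dom C g" "Cod C e = Dom C (fst (p1 \<cdot> m, p2 \<cdot> m))"
        using ea f g dm by (simp_all add: hom_iff)
      have "(p1 \<cdot> m) \<cdot> e = p1 \<cdot> (m \<cdot> e)" "(p2 \<cdot> m) \<cdot> e = p2 \<cdot> (m \<cdot> e)"
        using ea ma PF' by (simp_all add: assoc_hom)
      then show "fst (p1 \<cdot> m, p2 \<cdot> m) \<cdot> e = f" "snd (p1 \<cdot> m, p2 \<cdot> m) \<cdot> e = g"
        using me u by simp_all
    qed
  qed
  then show ?thesis by blast
qed

lemma rcomp_facts: assumes T: "is_rcomp C R S T" and R: "is_rel C X Y R" and S: "is_rel C Y Z S"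
  obtains p1 p2 P where "is_pullback C (snd R) (fst S) p1 p2" "is_image2 C (fst R \<cdot> p1) (snd S \<cdot> p2) T"
    "p1 \<in> hom C P (Dom C (fst R))" "p2 \<in> hom C P (Dom C (fst S))"
    "fst R \<cdot> p1 \<in> hom C P X" "snd S \<cdot> p2 \<in> hom C P Z" "snd R \<cdot> p1 = fst S \<cdot> p2"
proof -
  obtain p1 p2 where pb: "is_pullback C (snd R) (fst S) p1 p2" and im: "is_image2 C (fst R \<cdot> p1) (snd S \<cdot> p2) T"
    using T unfolding is_rcomp_def by blast
  note F = pullback_facts[OF pb]
  have dR: "Dom C (snd R) = Dom C (fst R)" using R unfolding is_rel_def jmono2_def by simp
  have dS: "Dom C (snd S) = Dom C (fst S)" using S unfolding is_rel_def jmono2_def by simp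
  have h: "p1 \<in> hom C (Dom C p1) (Dom C (fst R))" "p2 \<in> hom C (Dom C p1) (Dom C (fst S))"
    using F dR by auto
  have "fst R \<cdot> p1 \<in> hom C (Dom C p1) X" "snd S \<cdot> p2 \<in> hom C (Dom C p1) Z"
    using h rel_facts[OF R] rel_facts[OF S] dS by auto
  then show ?thesis using that[OF pb im h] F(6) by blast
qed

lemma rcomp_rel: assumes T: "is_rcomp C R S T" and R: "is_rel C X Y R" and S: "is_rel C Y Z S"
  shows "is_rel C X Z T"
proof -
  obtain p1 p2 P where "is_image2 C (fst R \<cdot> p1) (snd S \<cdot> p2) T" "fst R \<cdot> p1 \<in> hom C P X" "snd S \<cdot> p2 \<in> hom C P Z"
    using rcomp_facts[OF T R S] by metis
  then show ?thesis using image2_facts by metis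
qed

lemma rcomp_intro: assumes T: "is_rcomp C R S T" and R: "is_rel C X Y R" and S: "is_rel C Y Z S"
  and m1: "mem2 R f y" and m2: "mem2 S y g" shows "mem2 T f g"
proof -
  obtain p1 p2 P where pb: "is_pullback C (snd R) (fst S) p1 p2" and im: "is_image2 C (fst R \<cdot> p1) (snd S \<cdot> p2) T"
    and h: "p1 \<in> hom C P (Dom C (fst R))" "p2 \<in> hom C P (Dom C (fst S))"
    "fst R \<cdot> p1 \<in> hom C P X" "snd S \<cdot> p2 \<in> hom C P Z"
    using rcomp_facts[OF T R S] by metis
  define W where "W = Dom C f"
  obtain h1 where h1: "h1 \<in> hom C W (Dom C (fst R))" "fst R \<cdot> h1 = f" "snd R \<cdot> h1 = y"
    using m1 W_def by (metis mem2_E_dom)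
  have dy: "Dom C y = W" using h1 rel_facts[OF R] by (auto simp: hom_iff)
  obtain h2 where h2: "h2 \<in> hom C W (Dom C (fst S))" "fst S \<cdot> h2 = y" "snd S \<cdot> h2 = g"
    using m2 dy by (metis mem2_E_dom)
  have dR: "Dom C (snd R) = Dom C (fst R)" using R unfolding is_rel_def jmono2_def by simp
  obtain u where u: "u \<in> hom C W (Dom C p1)" "p1 \<cdot> u = h1" "p2 \<cdot> u = h2"
    using pullback_univ[OF pb, of h1 W h2] h1 h2 dR by auto
  have dp: "Dom C p1 = P" using h by (simp add: hom_iff)
  have u': "u \<in> hom C W P" using u dp by simp
  have "mem2 T ((fst R \<cdot> p1) \<cdot> u) ((snd S \<cdot> p2) \<cdot> u)" using image2_intro[OF im h(3,4) u'] .
  moreover have "(fst R \<cdot> p1) \<cdot> u = f" "(snd S \<cdot> p2) \<cdot> u = g"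
    using u' h rel_facts[OF R] rel_facts[OF S] u(2,3) h1(2) h2(3) by (simp_all add: assoc_hom)
  ultimately show ?thesis by simp
qed

lemma rcomp_elim: assumes T: "is_rcomp C R S T" and R: "is_rel C X Y R" and S: "is_rel C Y Z S"
  and m: "mem2 T f g" and f: "f \<in> hom C W X"
  shows "\<exists>q y. regular_epi C q \<and> q \<in> hom C (Dom C q) W \<and> mem2 R (f \<cdot> q) y \<and> mem2 S y (g \<cdot> q)"
proof -
  obtain p1 p2 P where pb: "is_pullback C (snd R) (fst S) p1 p2" and im: "is_image2 C (fst R \<cdot> p1) (snd S \<cdot> p2) T"
    and h: "p1 \<in> hom C P (Dom C (fst R))" "p2 \<in> hom C P (Dom C (fst S))"
    "fst R \<cdot> p1 \<in> hom C P X" "snd S \<cdot> p2 \<in> hom C P Z" and sq: "snd R \<cdot> p1 = fst S \<cdot> p2"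
    using rcomp_facts[OF T R S] by metis
  obtain q l where ql: "regular_epi C q" "q \<in> hom C (Dom C q) W" "l \<in> hom C (Dom C q) P"
    "(fst R \<cdot> p1) \<cdot> l = f \<cdot> q" "(snd S \<cdot> p2) \<cdot> l = g \<cdot> q"
    using image2_elim[OF im h(3,4) m f] by blast
  define V where "V = Dom C q"
  have l: "l \<in> hom C V P" and q: "q \<in> hom C V W" using ql V_def by auto
  have RF: "fst R \<in> hom C (Dom C (fst R)) X" "snd R \<in> hom C (Dom C (fst R)) Y" using rel_facts[OF R] by auto
  have SF: "fst S \<in> hom C (Dom C (fst S)) Y" "snd S \<in> hom C (Dom C (fst S)) Z" using rel_facts[OF S] by auto
  have pl1: "p1 \<cdot> l \<in> hom C V (Dom C (fst R))" and pl2: "p2 \<cdot> l \<in> hom C V (Dom C (fst S))" using l h by auto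
  have "mem2 R (f \<cdot> q) (snd R \<cdot> (p1 \<cdot> l))"
    by (rule mem2_I[OF R pl1]) (use ql(4) l h RF in \<open>simp add: assoc_hom\<close>)+
  moreover have "mem2 S (snd R \<cdot> (p1 \<cdot> l)) (g \<cdot> q)"
  proof (rule mem2_I[OF S pl2])
    show "fst S \<cdot> (p2 \<cdot> l) = snd R \<cdot> (p1 \<cdot> l)" using sq l h RF SF by (simp add: assoc_hom[symmetric])
    show "snd S \<cdot> (p2 \<cdot> l) = g \<cdot> q" using ql(5) l h SF by (simp add: assoc_hom)
  qed
  ultimately show ?thesis using ql(1,2) by blast
qed

lemma rcomp_ex: assumes R: "is_rel C X Y R" and S: "is_rel C Y Z S" shows "\<exists>T. is_rcomp C R S T"
proof -
  have dR: "Dom C (snd R) = Dom C (fst R)" using R unfolding is_rel_def jmono2_def by simp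
  have a: "snd R \<in> Ar C" "fst S \<in> Ar C" "Cod C (snd R) = Cod C (fst S)" using R S unfolding is_rel_def jmono2_def by auto
  obtain p1 p2 where pb: "is_pullback C (snd R) (fst S) p1 p2" using pullback_ex[OF a] by blast
  note F = pullback_facts[OF pb]
  have dS: "Dom C (snd S) = Dom C (fst S)" using S unfolding is_rel_def jmono2_def by simp
  have "fst R \<cdot> p1 \<in> hom C (Dom C p1) X" "snd S \<cdot> p2 \<in> hom C (Dom C p1) Z"
    using F dR dS rel_facts[OF R] rel_facts[OF S] by auto
  then obtain M where "is_image2 C (fst R \<cdot> p1) (snd S \<cdot> p2) M" using image2_ex by blast
  then show ?thesis unfolding is_rcomp_def using pb by blast
qed

lemma meet_is_rel: "is_meet C X Y A B M \<Longrightarrow> is_rel C X Y M"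
  unfolding is_meet_def by blast

lemma meet_elim: assumes M: "is_meet C X Y A B M" and A: "is_rel C X Y A" and B: "is_rel C X Y B"
  and m: "mem2 M f g" shows "mem2 A f g" "mem2 B f g"
proof -
  have "is_rel C X Y M" "rel_le C M A" "rel_le C M B" using M unfolding is_meet_def by auto
  then show "mem2 A f g" "mem2 B f g" using mem2_rel_le A B m by blast+
qed

lemma meet_intro: assumes M: "is_meet C X Y A B M" and A: "is_rel C X Y A" and B: "is_rel C X Y B"
  and ma: "mem2 A f g" and mb: "mem2 B f g" shows "mem2 M f g"
proof -
  define W where "W = Dom C f"
  have f: "f \<in> hom C W X" and g: "g \<in> hom C W Y" using mem2_hom[OF A ma] W_def by auto
  obtain U where U: "is_image2 C f g U" using image2_ex[OF f g] by blast
  have UR: "is_rel C X Y U" using image2_facts[OF U f g] by metis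
  have "rel_le C U A" "rel_le C U B" using image2_least[OF U f g] A B ma mb by auto
  then have "rel_le C U M" using M UR unfolding is_meet_def by blast
  moreover have "mem2 U f g"
  proof -
    have i: "Id C W \<in> hom C W W" using f hom_ob by (auto simp: hom_iff)
    have "f \<cdot> Id C W = f" "g \<cdot> Id C W = g" using f g by (auto simp: hom_iff)
    then show ?thesis using image2_intro[OF U f g i] by simp
  qed
  moreover have "is_rel C X Y M" using M unfolding is_meet_def by auto
  ultimately show ?thesis using mem2_rel_le UR by blast
qed

lemma meet_ex: assumes A: "is_rel C X Y A" and B: "is_rel C X Y B" shows "\<exists>M. is_meet C X Y A B M"
proof -
  note AF = rel_facts[OF A] and BF = rel_facts[OF B]
  define A0 where "A0 = Dom C (fst A)"
  define B0 where "B0 = Dom C (fst B)"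
  have AF': "fst A \<in> hom C A0 X" "snd A \<in> hom C A0 Y" using AF A0_def by auto
  have BF': "fst B \<in> hom C B0 X" "snd B \<in> hom C B0 Y" using BF B0_def by auto
  obtain p1 p2 where Pr: "is_product C X Y p1 p2" using product_ex AF hom_ob by blast
  define Q where "Q = Dom C p1"
  have PF: "p1 \<in> hom C Q X" "p2 \<in> hom C Q Y" using product_hom[OF Pr] Q_def by auto
  obtain a where a: "a \<in> hom C A0 Q" "p1 \<cdot> a = fst A" "p2 \<cdot> a = snd A" using product_pair[OF Pr AF'] Q_def by blast
  obtain b where b: "b \<in> hom C B0 Q" "p1 \<cdot> b = fst B" "p2 \<cdot> b = snd B" using product_pair[OF Pr BF'] Q_def by blast
  have ab: "a \<in> Ar C" "b \<in> Ar C" "Cod C a = Cod C b" using a b by (auto simp: hom_iff)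
  obtain p q where pb: "is_pullback C a b p q" using pullback_ex[OF ab] by blast
  note F = pullback_facts[OF pb]
  define P where "P = Dom C p"
  have p: "p \<in> hom C P A0" and q: "q \<in> hom C P B0" using F a b P_def by (auto simp: hom_iff)
  have sq: "a \<cdot> p = b \<cdot> q" using F by simp
  have f: "fst A \<cdot> p \<in> hom C P X" and g: "snd A \<cdot> p \<in> hom C P Y" using p AF' by auto
  obtain M where M: "is_image2 C (fst A \<cdot> p) (snd A \<cdot> p) M" using image2_ex[OF f g] by blast
  have MR: "is_rel C X Y M" using image2_facts[OF M f g] by metis
  have bq: "fst B \<cdot> q = fst A \<cdot> p" "snd B \<cdot> q = snd A \<cdot> p"
  proof -
    have "fst B \<cdot> q = p1 \<cdot> (b \<cdot> q)" "snd B \<cdot> q = p2 \<cdot> (b \<cdot> q)" using b q PF by (simp_all add: assoc_hom[symmetric])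
    moreover have "fst A \<cdot> p = p1 \<cdot> (a \<cdot> p)" "snd A \<cdot> p = p2 \<cdot> (a \<cdot> p)" using a p PF by (simp_all add: assoc_hom[symmetric])
    ultimately show "fst B \<cdot> q = fst A \<cdot> p" "snd B \<cdot> q = snd A \<cdot> p" using sq by simp_all
  qed
  have "is_meet C X Y A B M" unfolding is_meet_def
  proof (intro conjI allI impI)
    show "is_rel C X Y M" by fact
    have pA: "p \<in> hom C P (Dom C (fst A))" and qB: "q \<in> hom C P (Dom C (fst B))" using p q A0_def B0_def by auto
    show "rel_le C M A"
      by (rule image2_least[OF M f g A], rule mem2_I[OF A pA]) simp_all
    show "rel_le C M B"
      by (rule image2_least[OF M f g B], rule mem2_I[OF B qB]) (simp_all add: bq)
  next
    fix U assume U: "is_rel C X Y U \<and> rel_le C U A \<and> rel_le C U B"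
    note UF = rel_facts[of X Y U]
    define U0 where "U0 = Dom C (fst U)"
    obtain h where h: "h \<in> hom C U0 A0" "fst A \<cdot> h = fst U" "snd A \<cdot> h = snd U"
      using U unfolding rel_le_def U0_def A0_def by blast
    obtain k where k: "k \<in> hom C U0 B0" "fst B \<cdot> k = fst U" "snd B \<cdot> k = snd U"
      using U unfolding rel_le_def U0_def B0_def by blast
    have "a \<cdot> h = b \<cdot> k"
    proof (rule product_uniq[OF Pr])
      show "a \<cdot> h \<in> hom C U0 (Dom C p1)" "b \<cdot> k \<in> hom C U0 (Dom C p1)" using a b h k Q_def by auto
      show "p1 \<cdot> (a \<cdot> h) = p1 \<cdot> (b \<cdot> k)" "p2 \<cdot> (a \<cdot> h) = p2 \<cdot> (b \<cdot> k)"
        using a b h k PF by (simp_all add: assoc_hom[symmetric])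
    qed
    then obtain u where u: "u \<in> hom C U0 (Dom C p)" "p \<cdot> u = h" "q \<cdot> u = k"
      using pullback_univ[OF pb, of h U0 k] a b h k by (auto simp: hom_iff)
    have u': "u \<in> hom C U0 P" using u P_def by simp
    have "mem2 M ((fst A \<cdot> p) \<cdot> u) ((snd A \<cdot> p) \<cdot> u)" using image2_intro[OF M f g u'] .
    moreover have "(fst A \<cdot> p) \<cdot> u = fst U" "(snd A \<cdot> p) \<cdot> u = snd U"
      using u' p AF' u(2) h by (simp_all add: assoc_hom)
    ultimately show "rel_le C U M" unfolding rel_le_iff_mem2 by simp
  qed
  then show ?thesis by blast
qed

lemma kernel_pair_rel: assumes K: "is_pullback C f f k1 k2" and f: "f \<in> hom C R0 X" shows "is_rel C R0 R0 (k1, k2)"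
proof -
  note F = pullback_facts[OF K]
  have dk: "Dom C k2 = Dom C k1" using F by (simp add: hom_iff)
  show ?thesis unfolding is_rel_def jmono2_def fst_conv snd_conv
  proof (intro conjI ballI impI)
    show "k1 \<in> Ar C" "k2 \<in> Ar C" "Dom C k1 = Dom C k2" using F dk by (auto simp: hom_iff)
    show "Cod C k1 = R0" "Cod C k2 = R0" using F f by (auto simp: hom_iff)
    fix S u v assume "u \<in> hom C S (Dom C k1)" "v \<in> hom C S (Dom C k1)" "k1 \<cdot> u = k1 \<cdot> v \<and> k2 \<cdot> u = k2 \<cdot> v"
    then show "u = v" using pullback_uniq[OF K] by blast
  qed
qed

lemma kernel_pair_mem: assumes K: "is_pullback C f f k1 k2" and f: "f \<in> hom C R0 X"
  and u: "u \<in> hom C W R0" and v: "v \<in> hom C W R0"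
  shows "mem2 (k1, k2) u v \<longleftrightarrow> f \<cdot> u = f \<cdot> v"
proof
  note F = pullback_facts[OF K]
  have R: "is_rel C R0 R0 (k1, k2)" using kernel_pair_rel[OF K f] .
  assume "mem2 (k1, k2) u v"
  then obtain h where h: "h \<in> hom C W (Dom C k1)" "k1 \<cdot> h = u" "k2 \<cdot> h = v"
    using u by (metis mem2_E_dom hom_iff fst_conv snd_conv)
  have k: "k1 \<in> hom C (Dom C k1) R0" "k2 \<in> hom C (Dom C k1) R0" using F f by (auto simp: hom_iff)
  have "f \<cdot> u = (f \<cdot> k1) \<cdot> h" "f \<cdot> v = (f \<cdot> k2) \<cdot> h" using h k f by (simp_all add: assoc_hom)
  then show "f \<cdot> u = f \<cdot> v" using F(6) by simp
next
  note F = pullback_facts[OF K]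
  have R: "is_rel C R0 R0 (k1, k2)" using kernel_pair_rel[OF K f] .
  assume "f \<cdot> u = f \<cdot> v"
  then obtain h where h: "h \<in> hom C W (Dom C k1)" "k1 \<cdot> h = u" "k2 \<cdot> h = v"
    using pullback_univ[OF K, of u W v] u v f by (auto simp: hom_iff)
  show "mem2 (k1, k2) u v" using mem2_I[OF R, of h W u v] h by simp
qed

lemma kernel_pair_reflexive: assumes K: "is_pullback C f f k1 k2" and f: "f \<in> hom C R0 X" shows "reflexive_rel C R0 (k1, k2)"
proof -
  have R: "is_rel C R0 R0 (k1, k2)" using kernel_pair_rel[OF K f] .
  have i: "Id C R0 \<in> hom C R0 R0" using f hom_ob by (auto simp: hom_iff)
  have "mem2 (k1, k2) (Id C R0) (Id C R0)" using kernel_pair_mem[OF K f i i] by simp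
  then obtain h where "h \<in> hom C R0 (Dom C k1)" "k1 \<cdot> h = Id C R0" "k2 \<cdot> h = Id C R0"
    using i by (metis mem2_E_dom hom_iff fst_conv snd_conv)
  then show ?thesis unfolding reflexive_rel_def using R by auto
qed

lemma kernel_pair_equiv: assumes K: "is_pullback C f f k1 k2" and f: "f \<in> hom C R0 X" shows "equiv_rel C R0 (k1, k2)"
proof -
  have R: "is_rel C R0 R0 (k1, k2)" using kernel_pair_rel[OF K f] .
  note F = pullback_facts[OF K]
  define K0 where "K0 = Dom C k1"
  have k: "k1 \<in> hom C K0 R0" "k2 \<in> hom C K0 R0" using F f K0_def by (auto simp: hom_iff)
  have sym: "rel_le C (k2, k1) (k1, k2)" unfolding rel_le_iff_mem2 fst_conv snd_conv
    using kernel_pair_mem[OF K f k(2) k(1)] F(6) by simp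
  have trans: "rel_le C T (k1, k2)" if T: "is_rcomp C (k1, k2) (k1, k2) T" for T
  proof -
    have TR: "is_rel C R0 R0 T" using rcomp_rel[OF T R R] .
    define T0 where "T0 = Dom C (fst T)"
    have t: "fst T \<in> hom C T0 R0" "snd T \<in> hom C T0 R0" using rel_facts[OF TR] T0_def by auto
    obtain q y where qy: "regular_epi C q" "q \<in> hom C (Dom C q) T0" "mem2 (k1, k2) (fst T \<cdot> q) y"
      "mem2 (k1, k2) y (snd T \<cdot> q)"
      using rcomp_elim[OF T R R mem2_generic[OF TR] t(1)] by blast
    define V where "V = Dom C q"
    have q: "q \<in> hom C V T0" using qy V_def by simp
    have tq: "fst T \<cdot> q \<in> hom C V R0" "snd T \<cdot> q \<in> hom C V R0" using q t by auto
    have dtq: "Dom C (fst T \<cdot> q) = V" using tq by (simp add: hom_iff)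
    have y: "y \<in> hom C V R0" using mem2_hom[OF R qy(3)] dtq by simp
    have "f \<cdot> (fst T \<cdot> q) = f \<cdot> y" "f \<cdot> y = f \<cdot> (snd T \<cdot> q)"
      using kernel_pair_mem[OF K f tq(1) y] kernel_pair_mem[OF K f y tq(2)] qy by auto
    then have "mem2 (k1, k2) (fst T \<cdot> q) (snd T \<cdot> q)" using kernel_pair_mem[OF K f tq] by simp
    moreover have "Cod C q = T0" using q by (simp add: hom_iff)
    ultimately have "mem2 (k1, k2) (fst T) (snd T)" using mem2_descend[OF R qy(1)] t by simp
    then show ?thesis unfolding rel_le_iff_mem2 .
  qed
  show ?thesis unfolding equiv_rel_def using kernel_pair_reflexive[OF K f] sym trans by auto
qed

lemma kernel_pair_effective: assumes K: "is_pullback C f f k1 k2" and f: "f \<in> hom C R0 X" shows "effective_equiv_rel C R0 (k1, k2)"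
  unfolding effective_equiv_rel_def using kernel_pair_equiv[OF K f] K f by (auto simp: hom_iff)

lemma converse_rel: assumes R: "is_rel C X Y R" shows "is_rel C Y X (snd R, fst R)"
  using R unfolding is_rel_def jmono2_def by auto

lemma converse_mem: assumes R: "is_rel C X Y R" shows "mem2 (snd R, fst R) f g \<longleftrightarrow> mem2 R g f"
proof
  assume "mem2 (snd R, fst R) f g"
  then obtain h where h: "h \<in> hom C (Dom C f) (Dom C (snd R))" "snd R \<cdot> h = f" "fst R \<cdot> h = g"
    by (metis mem2_E fst_conv snd_conv)
  have dR: "Dom C (snd R) = Dom C (fst R)" using R unfolding is_rel_def jmono2_def by simp
  show "mem2 R g f" using mem2_I[OF R, of h "Dom C f" g f] h dR by simp
next
  assume "mem2 R g f"
  then obtain h where h: "h \<in> hom C (Dom C g) (Dom C (fst R))" "fst R \<cdot> h = g" "snd R \<cdot> h = f"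
    by (metis mem2_E)
  have dR: "Dom C (snd R) = Dom C (fst R)" using R unfolding is_rel_def jmono2_def by simp
  show "mem2 (snd R, fst R) f g" using mem2_I[OF converse_rel[OF R], of h "Dom C g" f g] h dR by simp
qed

lemma graph_rel: assumes f: "f \<in> hom C Q Y" shows "is_rel C Y Q (f, Id C Q)"
  unfolding is_rel_def jmono2_def using f hom_ob[OF f] by (auto simp: hom_iff)

lemma graph_mem2: assumes f: "f \<in> hom C Q Y" and k: "k \<in> hom C W Q"
  shows "mem2 (f, Id C Q) y k \<longleftrightarrow> y = f \<cdot> k"
proof
  assume "mem2 (f, Id C Q) y k"
  then obtain h where h: "h \<in> hom C (Dom C y) (Dom C f)" "f \<cdot> h = y" "Id C Q \<cdot> h = k"
    by (rule mem2_E) simp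
  then show "y = f \<cdot> k" using f by (simp add: hom_iff)
next
  assume "y = f \<cdot> k"
  then show "mem2 (f, Id C Q) y k" using mem2_I[OF graph_rel[OF f], of k W] f k by (simp add: hom_iff)
qed

lemma rcomp_graph_mem2:
  assumes T: "is_rcomp C R (f, Id C Q) T" and R: "is_rel C X Y R" and f: "f \<in> hom C Q Y"
    and w: "w \<in> hom C W X" and k: "k \<in> hom C W Q"
  shows "mem2 T w k \<longleftrightarrow> mem2 R w (f \<cdot> k)"
proof
  assume "mem2 T w k"
  then obtain q y where q: "regular_epi C q" "q \<in> hom C (Dom C q) W" and wy: "mem2 R (w \<cdot> q) y"
      and yk: "mem2 (f, Id C Q) y (k \<cdot> q)"
    using rcomp_elim[OF T R graph_rel[OF f] _ w] by blast
  have "y = (f \<cdot> k) \<cdot> q"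
    using yk graph_mem2[OF f comp_hom[OF q(2) k]] assoc_hom[OF q(2) k f] by simp
  moreover have "Cod C q = W" using q(2) by (simp add: hom_iff)
  ultimately show "mem2 R w (f \<cdot> k)" using mem2_descend[OF R q(1)] wy w comp_hom[OF k f] by simp
next
  assume "mem2 R w (f \<cdot> k)"
  then show "mem2 T w k" using rcomp_intro[OF T R graph_rel[OF f]] graph_mem2[OF f k] by blast
qed
lemma pairing_rel_obtain:
  assumes R: "is_rel C X Y R" and S: "is_rel C X Z S" and Pr: "is_product C Y Z pi1 pi2"
  obtains P where "is_rel C X (Dom C pi1) P"
    and "\<And>W w k. w \<in> hom C W X \<Longrightarrow> k \<in> hom C W (Dom C pi1) \<Longrightarrow>
      mem2 P w k \<longleftrightarrow> mem2 R w (pi1 \<cdot> k) \<and> mem2 S w (pi2 \<cdot> k)"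
proof -
  define Q where "Q = Dom C pi1"
  have pi: "pi1 \<in> hom C Q Y" "pi2 \<in> hom C Q Z" using product_hom[OF Pr] Q_def by auto
  obtain T1 where T1: "is_rcomp C R (pi1, Id C Q) T1" using rcomp_ex[OF R graph_rel[OF pi(1)]] by blast
  obtain T2 where T2: "is_rcomp C S (pi2, Id C Q) T2" using rcomp_ex[OF S graph_rel[OF pi(2)]] by blast
  have T1': "is_rel C X Q T1" and T2': "is_rel C X Q T2"
    using rcomp_rel[OF T1 R graph_rel[OF pi(1)]] rcomp_rel[OF T2 S graph_rel[OF pi(2)]] .
  obtain P where P: "is_meet C X Q T1 T2 P" using meet_ex[OF T1' T2'] by blast
  have "mem2 P w k \<longleftrightarrow> mem2 R w (pi1 \<cdot> k) \<and> mem2 S w (pi2 \<cdot> k)"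
    if "w \<in> hom C W X" "k \<in> hom C W Q" for W w k
  proof -
    have "mem2 P w k \<longleftrightarrow> mem2 T1 w k \<and> mem2 T2 w k"
      using meet_intro[OF P T1' T2'] meet_elim[OF P T1' T2'] by blast
    then show ?thesis using rcomp_graph_mem2[OF T1 R pi(1) that] rcomp_graph_mem2[OF T2 S pi(2) that]
      by simp
  qed
  then show thesis using that meet_is_rel[OF P] unfolding Q_def by blast
qed

lemma interval_rel_obtain:
  assumes A: "is_rel C Y X A" and B: "is_rel C X Z B" and Pr: "is_product C Y Z pi1 pi2"
  obtains P where "is_rel C (Dom C pi1) X P"
    and "\<And>W w k. w \<in> hom C W X \<Longrightarrow> k \<in> hom C W (Dom C pi1) \<Longrightarrow>
      mem2 P k w \<longleftrightarrow> mem2 A (pi1 \<cdot> k) w \<and> mem2 B w (pi2 \<cdot> k)"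
proof -
  obtain P where P: "is_rel C X (Dom C pi1) P" and P_mem: "\<And>W w k. w \<in> hom C W X \<Longrightarrow>
      k \<in> hom C W (Dom C pi1) \<Longrightarrow> mem2 P w k \<longleftrightarrow> mem2 (snd A, fst A) w (pi1 \<cdot> k) \<and> mem2 B w (pi2 \<cdot> k)"
    using pairing_rel_obtain[OF converse_rel[OF A] B Pr] by blast
  show thesis
  proof (rule that[of "(snd P, fst P)"])
    show "is_rel C (Dom C pi1) X (snd P, fst P)" using converse_rel[OF P] .
  next
    fix W w k assume "w \<in> hom C W X" "k \<in> hom C W (Dom C pi1)"
    then show "mem2 (snd P, fst P) k w \<longleftrightarrow> mem2 A (pi1 \<cdot> k) w \<and> mem2 B w (pi2 \<cdot> k)"
      using P_mem converse_mem[OF P] converse_mem[OF A] by simp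
  qed
qed

definition rel3_of_rel :: "'a \<Rightarrow> 'a \<Rightarrow> 'a \<times> 'a \<Rightarrow> 'a \<times> 'a \<times> 'a" where
  "rel3_of_rel pi1 pi2 T = (fst T, pi1 \<cdot> snd T, pi2 \<cdot> snd T)"

lemma rel3_of_rel_is_rel3: assumes Pr: "is_product C Y Z pi1 pi2" and T: "is_rel C X (Dom C pi1) T"
  shows "is_rel3 C X Y Z (rel3_of_rel pi1 pi2 T)"
proof -
  define Q where "Q = Dom C pi1"
  have PF: "pi1 \<in> hom C Q Y" "pi2 \<in> hom C Q Z" using product_hom[OF Pr] Q_def by auto
  define T0 where "T0 = Dom C (fst T)"
  have TF: "fst T \<in> hom C T0 X" "snd T \<in> hom C T0 Q" using rel_facts[OF T] T0_def Q_def by auto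
  show ?thesis unfolding is_rel3_def rel3_of_rel_def split jmono3_def
  proof (intro conjI ballI impI)
    show "fst T \<in> Ar C" "pi1 \<cdot> snd T \<in> Ar C" "pi2 \<cdot> snd T \<in> Ar C" using TF PF by (auto simp: hom_iff)
    show "Dom C (fst T) = Dom C (pi1 \<cdot> snd T)" "Dom C (fst T) = Dom C (pi2 \<cdot> snd T)"
      "Cod C (fst T) = X" "Cod C (pi1 \<cdot> snd T) = Y" "Cod C (pi2 \<cdot> snd T) = Z" using TF PF by (auto simp: hom_iff)
    fix S u v assume u: "u \<in> hom C S (Dom C (fst T))" and v: "v \<in> hom C S (Dom C (fst T))"
      and e: "fst T \<cdot> u = fst T \<cdot> v \<and> (pi1 \<cdot> snd T) \<cdot> u = (pi1 \<cdot> snd T) \<cdot> v \<and> (pi2 \<cdot> snd T) \<cdot> u = (pi2 \<cdot> snd T) \<cdot> v"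
    have u': "u \<in> hom C S T0" and v': "v \<in> hom C S T0" using u v T0_def by auto
    have "snd T \<cdot> u = snd T \<cdot> v"
    proof (rule product_uniq[OF Pr])
      show "snd T \<cdot> u \<in> hom C S (Dom C pi1)" "snd T \<cdot> v \<in> hom C S (Dom C pi1)" using u' v' TF Q_def by auto
      show "pi1 \<cdot> (snd T \<cdot> u) = pi1 \<cdot> (snd T \<cdot> v)" "pi2 \<cdot> (snd T \<cdot> u) = pi2 \<cdot> (snd T \<cdot> v)"
        using e u' v' TF PF by (simp_all add: assoc_hom[symmetric])
    qed
    then show "u = v" using rel_cancel[OF T u v] e by blast
  qed
qed

lemma rel3_of_rel_intro: assumes Pr: "is_product C Y Z pi1 pi2" and T: "is_rel C X (Dom C pi1) T"
  and m: "mem2 T a k" and a: "a \<in> hom C W X" and k: "k \<in> hom C W (Dom C pi1)"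
  shows "mem3 C a (pi1 \<cdot> k) (pi2 \<cdot> k) (rel3_of_rel pi1 pi2 T)"
proof -
  define Q where "Q = Dom C pi1"
  have PF: "pi1 \<in> hom C Q Y" "pi2 \<in> hom C Q Z" using product_hom[OF Pr] Q_def by auto
  define T0 where "T0 = Dom C (fst T)"
  have TF: "fst T \<in> hom C T0 X" "snd T \<in> hom C T0 Q" using rel_facts[OF T] T0_def Q_def by auto
  have da: "Dom C a = W" using a by (simp add: hom_iff)
  obtain h where h: "h \<in> hom C W T0" "fst T \<cdot> h = a" "snd T \<cdot> h = k" using m da T0_def by (metis mem2_E_dom)
  have "(pi1 \<cdot> snd T) \<cdot> h = pi1 \<cdot> k" "(pi2 \<cdot> snd T) \<cdot> h = pi2 \<cdot> k" using h TF PF by (simp_all add: assoc_hom)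
  then show ?thesis unfolding mem3_def rel3_of_rel_def split using h da T0_def by auto
qed

lemma rel3_of_rel_elim: assumes Pr: "is_product C Y Z pi1 pi2" and T: "is_rel C X (Dom C pi1) T"
  and m: "mem3 C a b c (rel3_of_rel pi1 pi2 T)" and a: "a \<in> hom C W X"
  shows "\<exists>k\<in>hom C W (Dom C pi1). mem2 T a k \<and> pi1 \<cdot> k = b \<and> pi2 \<cdot> k = c"
proof -
  define Q where "Q = Dom C pi1"
  have PF: "pi1 \<in> hom C Q Y" "pi2 \<in> hom C Q Z" using product_hom[OF Pr] Q_def by auto
  define T0 where "T0 = Dom C (fst T)"
  have TF: "fst T \<in> hom C T0 X" "snd T \<in> hom C T0 Q" using rel_facts[OF T] T0_def Q_def by auto
  have da: "Dom C a = W" using a by (simp add: hom_iff)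
  obtain h where h: "h \<in> hom C W T0" "fst T \<cdot> h = a" "(pi1 \<cdot> snd T) \<cdot> h = b" "(pi2 \<cdot> snd T) \<cdot> h = c"
    using m da T0_def unfolding mem3_def rel3_of_rel_def split by auto
  have "mem2 T a (snd T \<cdot> h)" using mem2_I[OF T, of h W a "snd T \<cdot> h"] h T0_def by simp
  moreover have "pi1 \<cdot> (snd T \<cdot> h) = b" "pi2 \<cdot> (snd T \<cdot> h) = c" using h TF PF by (simp_all add: assoc_hom[symmetric])
  moreover have "snd T \<cdot> h \<in> hom C W Q" using h TF by auto
  ultimately show ?thesis using Q_def by blast
qed

lemma span_rel3_obtain:
  assumes R1: "is_rel C X1 Xc R1" and R2: "is_rel C Xc Y R2" and R3: "is_rel C Xc Z R3"
  obtains S3 where "is_rel3 C X1 Y Z S3"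
    and "\<And>W a w b c. a \<in> hom C W X1 \<Longrightarrow> w \<in> hom C W Xc \<Longrightarrow> b \<in> hom C W Y \<Longrightarrow> c \<in> hom C W Z \<Longrightarrow>
      mem2 R1 a w \<Longrightarrow> mem2 R2 w b \<Longrightarrow> mem2 R3 w c \<Longrightarrow> mem3 C a b c S3"
    and "\<And>W a b c. a \<in> hom C W X1 \<Longrightarrow> mem3 C a b c S3 \<Longrightarrow>
      \<exists>q w. regular_epi C q \<and> q \<in> hom C (Dom C q) W \<and> mem2 R1 (a \<cdot> q) w \<and> mem2 R2 w (b \<cdot> q) \<and>
        mem2 R3 w (c \<cdot> q)"
proof -
  have "Y \<in> Ob C" "Z \<in> Ob C" using rel_facts[OF R2] rel_facts[OF R3] hom_ob by blast+
  then obtain pi1 pi2 where Pr: "is_product C Y Z pi1 pi2" using product_ex by blast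
  define Q where "Q = Dom C pi1"
  have PF: "pi1 \<in> hom C Q Y" "pi2 \<in> hom C Q Z" using product_hom[OF Pr] Q_def by auto
  obtain P where PR: "is_rel C Xc Q P" and char: "\<And>W w k. w \<in> hom C W Xc \<Longrightarrow> k \<in> hom C W Q \<Longrightarrow>
     (mem2 P w k \<longleftrightarrow> mem2 R2 w (pi1 \<cdot> k) \<and> mem2 R3 w (pi2 \<cdot> k))"
    using pairing_rel_obtain[OF R2 R3 Pr] Q_def by blast
  obtain T where T: "is_rcomp C R1 P T" using rcomp_ex[OF R1 PR] by blast
  have TR: "is_rel C X1 Q T" using rcomp_rel[OF T R1 PR] .
  have TR': "is_rel C X1 (Dom C pi1) T" using TR Q_def by simp
  define S3 where "S3 = rel3_of_rel pi1 pi2 T"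
  have "is_rel3 C X1 Y Z S3" using rel3_of_rel_is_rel3[OF Pr TR'] S3_def by simp
  moreover have "mem3 C a b c S3" if a: "a \<in> hom C W X1" and w: "w \<in> hom C W Xc" and b: "b \<in> hom C W Y"
    and c: "c \<in> hom C W Z" and m1: "mem2 R1 a w" and m2: "mem2 R2 w b" and m3: "mem2 R3 w c" for W a w b c
  proof -
    obtain k where k: "k \<in> hom C W Q" "pi1 \<cdot> k = b" "pi2 \<cdot> k = c" using product_pair[OF Pr b c] Q_def by blast
    have "mem2 P w k" using char[OF w k(1)] k m2 m3 by simp
    then have "mem2 T a k" using rcomp_intro[OF T R1 PR m1] by blast
    then show ?thesis using rel3_of_rel_intro[OF Pr TR' _ a, of k] k Q_def S3_def by simp
  qed
  moreover have "\<exists>q w. regular_epi C q \<and> q \<in> hom C (Dom C q) W \<and> mem2 R1 (a \<cdot> q) w \<and> mem2 R2 w (b \<cdot> q) \<and> mem2 R3 w (c \<cdot> q)"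
    if a: "a \<in> hom C W X1" and m: "mem3 C a b c S3" for W a b c
  proof -
    obtain k where k: "k \<in> hom C W Q" "mem2 T a k" "pi1 \<cdot> k = b" "pi2 \<cdot> k = c"
      using rel3_of_rel_elim[OF Pr TR' _ a] m S3_def Q_def by blast
    obtain q w where qw: "regular_epi C q" "q \<in> hom C (Dom C q) W" "mem2 R1 (a \<cdot> q) w" "mem2 P w (k \<cdot> q)"
      using rcomp_elim[OF T R1 PR k(2) a] by blast
    define V where "V = Dom C q"
    have q: "q \<in> hom C V W" using qw V_def by simp
    have aq: "a \<cdot> q \<in> hom C V X1" using a q by auto
    have "Dom C (a \<cdot> q) = V" using aq by (simp add: hom_iff)
    then have w: "w \<in> hom C V Xc" using mem2_hom[OF R1 qw(3)] by simp
    have kq: "k \<cdot> q \<in> hom C V Q" using k q by auto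
    have "mem2 R2 w (pi1 \<cdot> (k \<cdot> q))" "mem2 R3 w (pi2 \<cdot> (k \<cdot> q))" using char[OF w kq] qw(4) by auto
    moreover have "pi1 \<cdot> (k \<cdot> q) = b \<cdot> q" "pi2 \<cdot> (k \<cdot> q) = c \<cdot> q" using k q PF by (simp_all add: assoc_hom[symmetric])
    ultimately show ?thesis using qw by auto
  qed
  ultimately show thesis by (rule that)
qed

lemma mem3_descend: assumes R: "is_rel3 C X Y Z (r1, r2, r3)" and q: "regular_epi C q"
  and x: "x \<in> hom C (Cod C q) X" and y: "y \<in> hom C (Cod C q) Y" and z: "z \<in> hom C (Cod C q) Z"
  and t: "t \<in> hom C (Dom C q) (Dom C r1)" and e: "r1 \<cdot> t = x \<cdot> q" "r2 \<cdot> t = y \<cdot> q" "r3 \<cdot> t = z \<cdot> q"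
  shows "mem3 C x y z (r1, r2, r3)"
proof -
  have J: "jmono3 C r1 r2 r3" and cods: "Cod C r1 = X" "Cod C r2 = Y" "Cod C r3 = Z" using R unfolding is_rel3_def by auto
  define R0 where "R0 = Dom C r1"
  have RF: "r1 \<in> hom C R0 X" "r2 \<in> hom C R0 Y" "r3 \<in> hom C R0 Z" using J cods R0_def unfolding jmono3_def by (auto simp: hom_iff)
  have qa: "q \<in> hom C (Dom C q) (Cod C q)" using regular_epi_ar[OF q] by (simp add: hom_iff)
  have "\<exists>k\<in>hom C (Cod C q) R0. k \<cdot> q = t"
  proof (rule regular_epi_descend[OF q])
    show "t \<in> hom C (Dom C q) R0" using t R0_def by simp
    fix T u v assume u: "u \<in> hom C T (Dom C q)" and v: "v \<in> hom C T (Dom C q)" and uv: "q \<cdot> u = q \<cdot> v"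
    have tu: "t \<cdot> u \<in> hom C T R0" "t \<cdot> v \<in> hom C T R0" using t u v R0_def by auto
    have "r1 \<cdot> (t \<cdot> u) = x \<cdot> (q \<cdot> u)" "r2 \<cdot> (t \<cdot> u) = y \<cdot> (q \<cdot> u)" "r3 \<cdot> (t \<cdot> u) = z \<cdot> (q \<cdot> u)"
      "r1 \<cdot> (t \<cdot> v) = x \<cdot> (q \<cdot> v)" "r2 \<cdot> (t \<cdot> v) = y \<cdot> (q \<cdot> v)" "r3 \<cdot> (t \<cdot> v) = z \<cdot> (q \<cdot> v)"
      using t u v e qa x y z RF R0_def by (simp_all add: assoc_hom[symmetric])
    then have "r1 \<cdot> (t \<cdot> u) = r1 \<cdot> (t \<cdot> v) \<and> r2 \<cdot> (t \<cdot> u) = r2 \<cdot> (t \<cdot> v) \<and> r3 \<cdot> (t \<cdot> u) = r3 \<cdot> (t \<cdot> v)"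
      using uv by simp
    moreover have "T \<in> Ob C" using u hom_ob by blast
    ultimately show "t \<cdot> u = t \<cdot> v" using J tu R0_def unfolding jmono3_def by blast
  qed
  then obtain k where k: "k \<in> hom C (Cod C q) R0" "k \<cdot> q = t" by blast
  have "(r1 \<cdot> k) \<cdot> q = x \<cdot> q" "(r2 \<cdot> k) \<cdot> q = y \<cdot> q" "(r3 \<cdot> k) \<cdot> q = z \<cdot> q"
    using k qa RF e by (simp_all add: assoc_hom)
  then have "r1 \<cdot> k = x" "r2 \<cdot> k = y" "r3 \<cdot> k = z"
    using regular_epi_cancel[OF q, of "r1 \<cdot> k" X x] regular_epi_cancel[OF q, of "r2 \<cdot> k" Y y] regular_epi_cancel[OF q, of "r3 \<cdot> k" Z z] k RF x y z
    by auto
  moreover have "Dom C x = Cod C q" using x by (simp add: hom_iff)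
  ultimately show ?thesis unfolding mem3_def split using k R0_def by auto
qed

subsection \<open>Majority implies the distributive laws\<close>

lemma majority_selectingD: assumes "majority_selecting C X Y Z R" "S \<in> Ob C" "x \<in> hom C S X" "x' \<in> hom C S X"
  "y \<in> hom C S Y" "y' \<in> hom C S Y" "z \<in> hom C S Z" "z' \<in> hom C S Z"
  "mem3 C x y z' R" "mem3 C x y' z R" "mem3 C x' y z R" shows "mem3 C x y z R"
  using assms unfolding majority_selecting_def by blast

lemma majority_comp_meet_cover:
  assumes maj: "majority_category C" and A: "reflexive_rel C X A" and B: "reflexive_rel C X B"
    and D: "reflexive_rel C X D" and x: "x \<in> hom C V X" and z: "z \<in> hom C V X"
    and u: "u \<in> hom C V X" and y: "y \<in> hom C V X"
    and xu: "mem2 A x u" and uz: "mem2 B u z" and xy: "mem2 A x y" and yz: "mem2 D y z"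
  shows "\<exists>q w. regular_epi C q \<and> q \<in> hom C (Dom C q) V \<and> mem2 A (x \<cdot> q) w \<and>
    mem2 B w (z \<cdot> q) \<and> mem2 D w (z \<cdot> q)"
proof -
  txt \<open>\<open>S3\<close> consists of the triples \<open>(a, b, c)\<close> with some \<open>w\<close> such that \<open>a A w\<close>, \<open>w B b\<close>
    and \<open>w D c\<close>; majority turns \<open>(x, z, u)\<close>, \<open>(x, y, z)\<close>, \<open>(z, z, z)\<close> into \<open>(x, z, z)\<close>.\<close>
  obtain S3 where S3: "is_rel3 C X X X S3"
    and S3I: "\<And>W a w b c. a \<in> hom C W X \<Longrightarrow> w \<in> hom C W X \<Longrightarrow> b \<in> hom C W X \<Longrightarrow> c \<in> hom C W X \<Longrightarrow>
        mem2 A a w \<Longrightarrow> mem2 B w b \<Longrightarrow> mem2 D w c \<Longrightarrow> mem3 C a b c S3"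
    and S3E: "\<And>W a b c. a \<in> hom C W X \<Longrightarrow> mem3 C a b c S3 \<Longrightarrow>
        (\<exists>q w. regular_epi C q \<and> q \<in> hom C (Dom C q) W \<and> mem2 A (a \<cdot> q) w \<and> mem2 B w (b \<cdot> q) \<and>
          mem2 D w (c \<cdot> q))"
    using span_rel3_obtain[OF reflexive_rel_is_rel[OF A] reflexive_rel_is_rel[OF B] reflexive_rel_is_rel[OF D]]
    by blast
  have V: "V \<in> Ob C" using hom_ob[OF x] by blast
  have "majority_selecting C X X X S3" using maj S3 x hom_ob unfolding majority_category_def by blast
  moreover have "mem3 C x z u S3" using S3I[OF x u z u xu uz reflexive_mem2[OF D u]] .
  moreover have "mem3 C x y z S3" using S3I[OF x y y z xy reflexive_mem2[OF B y] yz] .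
  moreover have "mem3 C z z z S3"
    using S3I[OF z z z z reflexive_mem2[OF A z] reflexive_mem2[OF B z] reflexive_mem2[OF D z]] .
  ultimately have "mem3 C x z z S3" using majority_selectingD[OF _ V x z z y z u] by blast
  then show ?thesis using S3E[OF x] by blast
qed

lemma majority_comp_meet_mem2:
  assumes maj: "majority_category C" and A: "reflexive_rel C X A" and B: "reflexive_rel C X B"
    and D: "reflexive_rel C X D" and AB: "is_rcomp C A B AB" and AD: "is_rcomp C A D AD"
    and BD: "is_meet C X X B D BD" and R: "is_rcomp C A BD R"
    and x: "x \<in> hom C W X" and z: "z \<in> hom C W X" and xz: "mem2 AB x z" "mem2 AD x z"
  shows "mem2 R x z"
proof -
  have A': "is_rel C X X A" and B': "is_rel C X X B" and D': "is_rel C X X D"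
    using A B D reflexive_rel_is_rel by auto
  have BD': "is_rel C X X BD" using meet_is_rel[OF BD] .
  have R': "is_rel C X X R" using rcomp_rel[OF R A' BD'] .
  obtain q1 u where q1: "regular_epi C q1" "q1 \<in> hom C (Dom C q1) W" and xu: "mem2 A (x \<cdot> q1) u"
      and uz: "mem2 B u (z \<cdot> q1)"
    using rcomp_elim[OF AB A' B' xz(1) x] by blast
  define x1 z1 where "x1 = x \<cdot> q1" and "z1 = z \<cdot> q1"
  have x1: "x1 \<in> hom C (Dom C q1) X" and z1: "z1 \<in> hom C (Dom C q1) X"
    using x z q1(2) unfolding x1_def z1_def by auto
  have u: "u \<in> hom C (Dom C q1) X" using mem2_hom(2)[OF A' xu] x1 unfolding x1_def by (simp add: hom_iff)
  have "mem2 AD x1 z1"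
    using mem2_precomp[OF rcomp_rel[OF AD A' D'] xz(2)] q1(2) x unfolding x1_def z1_def by (simp add: hom_iff)
  then obtain q2 y where q2: "regular_epi C q2" "q2 \<in> hom C (Dom C q2) (Dom C q1)"
      and xy: "mem2 A (x1 \<cdot> q2) y" and yz: "mem2 D y (z1 \<cdot> q2)"
    using rcomp_elim[OF AD A' D' _ x1] by blast
  define x2 z2 where "x2 = x1 \<cdot> q2" and "z2 = z1 \<cdot> q2"
  have x2: "x2 \<in> hom C (Dom C q2) X" and z2: "z2 \<in> hom C (Dom C q2) X" and uq2: "u \<cdot> q2 \<in> hom C (Dom C q2) X"
    using x1 z1 u q2(2) unfolding x2_def z2_def by auto
  have y: "y \<in> hom C (Dom C q2) X" using mem2_hom(2)[OF A' xy] x2 unfolding x2_def by (simp add: hom_iff)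
  have "mem2 A x2 (u \<cdot> q2)" "mem2 B (u \<cdot> q2) z2"
    using mem2_precomp[OF A' xu] mem2_precomp[OF B' uz] q2(2) x1 u unfolding x1_def x2_def z2_def z1_def
    by (auto simp: hom_iff)
  then obtain q3 w where q3: "regular_epi C q3" "q3 \<in> hom C (Dom C q3) (Dom C q2)"
      and w: "mem2 A (x2 \<cdot> q3) w" "mem2 B w (z2 \<cdot> q3)" "mem2 D w (z2 \<cdot> q3)"
    using majority_comp_meet_cover[OF maj A B D x2 z2 uq2 y] xy yz unfolding x2_def z2_def by blast
  have "mem2 R (x2 \<cdot> q3) (z2 \<cdot> q3)" using rcomp_intro[OF R A' BD' w(1) meet_intro[OF BD B' D' w(2,3)]] .
  then have "mem2 R x2 z2" using mem2_descend[OF R' q3(1)] q3(2) x2 z2 by (simp add: hom_iff)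
  then have "mem2 R x1 z1" using mem2_descend[OF R' q2(1)] q2(2) x1 z1 unfolding x2_def z2_def by (simp add: hom_iff)
  then show "mem2 R x z" using mem2_descend[OF R' q1(1)] q1(2) x z unfolding x1_def z1_def by (simp add: hom_iff)
qed

lemma majority_category_imp_cond_ii: assumes maj: "majority_category C" shows "cond_ii C"
  unfolding cond_ii_def
proof (intro ballI allI impI, elim conjE)
  fix X A B D AB AD M BD R
  assume A: "reflexive_rel C X A" and B: "reflexive_rel C X B" and D: "reflexive_rel C X D"
    and AB: "is_rcomp C A B AB" and AD: "is_rcomp C A D AD" and M: "is_meet C X X AB AD M"
    and BD: "is_meet C X X B D BD" and R: "is_rcomp C A BD R"
  have A': "is_rel C X X A" and B': "is_rel C X X B" and D': "is_rel C X X D"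
    using A B D reflexive_rel_is_rel by auto
  have M': "is_rel C X X M" using meet_is_rel[OF M] .
  note m = rel_facts[OF M']
  have "mem2 AB (fst M) (snd M)" "mem2 AD (fst M) (snd M)"
    using meet_elim[OF M rcomp_rel[OF AB A' B'] rcomp_rel[OF AD A' D'] mem2_generic[OF M']] by auto
  then show "rel_le C M R"
    unfolding rel_le_iff_mem2 using majority_comp_meet_mem2[OF maj A B D AB AD BD R m] by blast
qed

lemma majority_meet_comp_cover:
  assumes maj: "majority_category C" and A: "reflexive_rel C X A" and B: "reflexive_rel C X B"
    and D: "reflexive_rel C X D" and x: "x \<in> hom C V X" and y: "y \<in> hom C V X" and z: "z \<in> hom C V X"
    and xz: "mem2 A x z" and xy: "mem2 B x y" and yz: "mem2 D y z"
  shows "\<exists>q w. regular_epi C q \<and> q \<in> hom C (Dom C q) V \<and> mem2 A (x \<cdot> q) w \<and> mem2 A w (z \<cdot> q) \<and>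
    mem2 B (x \<cdot> q) w \<and> mem2 D w (z \<cdot> q)"
proof -
  have A': "is_rel C X X A" and B': "is_rel C X X B" and D': "is_rel C X X D"
    using A B D reflexive_rel_is_rel by auto
  obtain pi1 pi2 where Pr: "is_product C X X pi1 pi2" using product_ex hom_ob[OF x] by blast
  define Q where "Q = Dom C pi1"
  have pi: "pi1 \<in> hom C Q X" "pi2 \<in> hom C Q X" using product_hom[OF Pr] Q_def by auto
  obtain P where P: "is_rel C Q X P" and P_mem: "\<And>W w k. w \<in> hom C W X \<Longrightarrow> k \<in> hom C W Q \<Longrightarrow>
     mem2 P k w \<longleftrightarrow> mem2 A (pi1 \<cdot> k) w \<and> mem2 A w (pi2 \<cdot> k)"
    using interval_rel_obtain[OF A' A' Pr] unfolding Q_def by blast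
  have B_conv_mem: "mem2 (snd B, fst B) w b \<longleftrightarrow> mem2 B b w" for w b using converse_mem[OF B'] .
  txt \<open>\<open>S3\<close> consists of the triples \<open>((a, a'), b, c)\<close> with some \<open>w\<close> such that
    \<open>a A w A a'\<close>, \<open>b B w\<close> and \<open>w D c\<close>; majority is applied to it at \<open>((x, z), x, z)\<close>.\<close>
  obtain S3 where S3: "is_rel3 C Q X X S3"
    and S3I: "\<And>W a w b c. a \<in> hom C W Q \<Longrightarrow> w \<in> hom C W X \<Longrightarrow> b \<in> hom C W X \<Longrightarrow> c \<in> hom C W X \<Longrightarrow>
        mem2 P a w \<Longrightarrow> mem2 (snd B, fst B) w b \<Longrightarrow> mem2 D w c \<Longrightarrow> mem3 C a b c S3"
    and S3E: "\<And>W a b c. a \<in> hom C W Q \<Longrightarrow> mem3 C a b c S3 \<Longrightarrow>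
        \<exists>q w. regular_epi C q \<and> q \<in> hom C (Dom C q) W \<and> mem2 P (a \<cdot> q) w \<and>
          mem2 (snd B, fst B) w (b \<cdot> q) \<and> mem2 D w (c \<cdot> q)"
    using span_rel3_obtain[OF P converse_rel[OF B'] D'] by blast
  obtain k where k: "k \<in> hom C V Q" "pi1 \<cdot> k = x" "pi2 \<cdot> k = z" using product_pair[OF Pr x z] Q_def by blast
  obtain k' where k': "k' \<in> hom C V Q" "pi1 \<cdot> k' = y" "pi2 \<cdot> k' = y" using product_pair[OF Pr y y] Q_def by blast
  have V: "V \<in> Ob C" using hom_ob[OF x] by blast
  have "majority_selecting C Q X X S3" using maj S3 pi hom_ob unfolding majority_category_def by blast
  moreover have "mem3 C k x x S3"
    using S3I[OF k(1) x x x] P_mem[OF x k(1)] k xz B_conv_mem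
      reflexive_mem2[OF A x] reflexive_mem2[OF B x] reflexive_mem2[OF D x] by simp
  moreover have "mem3 C k z z S3"
    using S3I[OF k(1) z z z] P_mem[OF z k(1)] k xz B_conv_mem
      reflexive_mem2[OF A z] reflexive_mem2[OF B z] reflexive_mem2[OF D z] by simp
  moreover have "mem3 C k' x z S3"
    using S3I[OF k'(1) y x z] P_mem[OF y k'(1)] k' B_conv_mem xy yz reflexive_mem2[OF A y] by simp
  ultimately have "mem3 C k x z S3" using majority_selectingD[OF _ V k(1) k'(1) x z z x] by blast
  then obtain q w where q: "regular_epi C q" "q \<in> hom C (Dom C q) V" and kw: "mem2 P (k \<cdot> q) w"
      and xw: "mem2 (snd B, fst B) w (x \<cdot> q)" and wz: "mem2 D w (z \<cdot> q)"
    using S3E[OF k(1)] by blast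
  have kq: "k \<cdot> q \<in> hom C (Dom C q) Q" using k(1) q(2) by auto
  have w: "w \<in> hom C (Dom C q) X" using mem2_hom[OF D' wz] z q(2) by (auto simp: hom_iff)
  have "pi1 \<cdot> (k \<cdot> q) = x \<cdot> q" "pi2 \<cdot> (k \<cdot> q) = z \<cdot> q"
    using k q(2) pi by (simp_all add: assoc_hom[symmetric])
  then have "mem2 A (x \<cdot> q) w" "mem2 A w (z \<cdot> q)" using P_mem[OF w kq] kw by auto
  then show ?thesis using q xw wz B_conv_mem by blast
qed

lemma majority_meet_comp_mem2:
  assumes maj: "majority_category C" and A: "reflexive_rel C X A" and B: "reflexive_rel C X B"
    and D: "reflexive_rel C X D" and BD: "is_rcomp C B D BD" and AB: "is_meet C X X A B AB"
    and AD: "is_meet C X X A D AD" and R: "is_rcomp C AB AD R"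
    and x: "x \<in> hom C W X" and z: "z \<in> hom C W X" and xz: "mem2 A x z" "mem2 BD x z"
  shows "mem2 R x z"
proof -
  have A': "is_rel C X X A" and B': "is_rel C X X B" and D': "is_rel C X X D"
    using A B D reflexive_rel_is_rel by auto
  have AB': "is_rel C X X AB" and AD': "is_rel C X X AD" using meet_is_rel AB AD by auto
  have R': "is_rel C X X R" using rcomp_rel[OF R AB' AD'] .
  obtain q1 y where q1: "regular_epi C q1" "q1 \<in> hom C (Dom C q1) W" and xy: "mem2 B (x \<cdot> q1) y"
      and yz: "mem2 D y (z \<cdot> q1)"
    using rcomp_elim[OF BD B' D' xz(2) x] by blast
  define x1 z1 where "x1 = x \<cdot> q1" and "z1 = z \<cdot> q1"
  have x1: "x1 \<in> hom C (Dom C q1) X" and z1: "z1 \<in> hom C (Dom C q1) X"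
    using x z q1(2) unfolding x1_def z1_def by auto
  have y: "y \<in> hom C (Dom C q1) X" using mem2_hom(2)[OF B' xy] x1 unfolding x1_def by (simp add: hom_iff)
  have "mem2 A x1 z1" using mem2_precomp[OF A' xz(1)] q1(2) x unfolding x1_def z1_def by (simp add: hom_iff)
  then obtain q2 w where q2: "regular_epi C q2" "q2 \<in> hom C (Dom C q2) (Dom C q1)"
      and w: "mem2 A (x1 \<cdot> q2) w" "mem2 A w (z1 \<cdot> q2)" "mem2 B (x1 \<cdot> q2) w" "mem2 D w (z1 \<cdot> q2)"
    using majority_meet_comp_cover[OF maj A B D x1 y z1] xy yz unfolding x1_def z1_def by blast
  have "mem2 R (x1 \<cdot> q2) (z1 \<cdot> q2)"
    using rcomp_intro[OF R AB' AD' meet_intro[OF AB A' B' w(1,3)] meet_intro[OF AD A' D' w(2,4)]] .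
  then have "mem2 R x1 z1" using mem2_descend[OF R' q2(1)] q2(2) x1 z1 by (simp add: hom_iff)
  then show "mem2 R x z" using mem2_descend[OF R' q1(1)] q1(2) x z unfolding x1_def z1_def by (simp add: hom_iff)
qed

lemma majority_category_imp_cond_iii: assumes maj: "majority_category C" shows "cond_iii C"
  unfolding cond_iii_def
proof (intro ballI allI impI, elim conjE)
  fix X A B D BD M AB AD R
  assume A: "reflexive_rel C X A" and B: "reflexive_rel C X B" and D: "reflexive_rel C X D"
    and BD: "is_rcomp C B D BD" and M: "is_meet C X X A BD M" and AB: "is_meet C X X A B AB"
    and AD: "is_meet C X X A D AD" and R: "is_rcomp C AB AD R"
  have A': "is_rel C X X A" and B': "is_rel C X X B" and D': "is_rel C X X D"
    using A B D reflexive_rel_is_rel by auto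
  have M': "is_rel C X X M" using meet_is_rel[OF M] .
  note m = rel_facts[OF M']
  have "mem2 A (fst M) (snd M)" "mem2 BD (fst M) (snd M)"
    using meet_elim[OF M A' rcomp_rel[OF BD B' D'] mem2_generic[OF M']] by auto
  then show "rel_le C M R"
    unfolding rel_le_iff_mem2 using majority_meet_comp_mem2[OF maj A B D BD AB AD R m] by blast
qed

lemma equiv_rel_trans_mem2: assumes a: "equiv_rel C X a" and m1: "mem2 a u v" and m2: "mem2 a v w" shows "mem2 a u w"
proof -
  have R: "is_rel C X X a" using a reflexive_rel_is_rel unfolding equiv_rel_def by blast
  obtain T where T: "is_rcomp C a a T" using rcomp_ex[OF R R] by blast
  have "rel_le C T a" using a T unfolding equiv_rel_def by blast
  moreover have "mem2 T u w" using rcomp_intro[OF T R R m1 m2] .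
  ultimately show ?thesis using mem2_rel_le[OF rcomp_rel[OF T R R] R] by blast
qed

lemma distrib_ge_equiv_rel: assumes ea: "equiv_rel C X a" and Rb: "is_rel C X X b" and Rc: "is_rel C X X c"
  and bc: "is_rcomp C b c bc" and M: "is_meet C X X a bc M" and ab: "is_meet C X X a b ab"
  and ac: "is_meet C X X a c ac" and T: "is_rcomp C ab ac T" shows "rel_le C T M"
proof -
  have Ra: "is_rel C X X a" using ea reflexive_rel_is_rel unfolding equiv_rel_def by blast
  have Rbc: "is_rel C X X bc" using rcomp_rel[OF bc Rb Rc] .
  have Rab: "is_rel C X X ab" and Rac: "is_rel C X X ac" and RM: "is_rel C X X M" using meet_is_rel ab ac M by auto
  have RT: "is_rel C X X T" using rcomp_rel[OF T Rab Rac] .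
  define T0 where "T0 = Dom C (fst T)"
  have t: "fst T \<in> hom C T0 X" "snd T \<in> hom C T0 X" using rel_facts[OF RT] T0_def by auto
  obtain q y where qy: "regular_epi C q" "q \<in> hom C (Dom C q) T0" "mem2 ab (fst T \<cdot> q) y" "mem2 ac y (snd T \<cdot> q)"
    using rcomp_elim[OF T Rab Rac mem2_generic[OF RT] t(1)] by blast
  have "mem2 a (fst T \<cdot> q) y" "mem2 b (fst T \<cdot> q) y" using meet_elim[OF ab Ra Rb qy(3)] by auto
  moreover have "mem2 a y (snd T \<cdot> q)" "mem2 c y (snd T \<cdot> q)" using meet_elim[OF ac Ra Rc qy(4)] by auto
  ultimately have "mem2 a (fst T \<cdot> q) (snd T \<cdot> q)" "mem2 bc (fst T \<cdot> q) (snd T \<cdot> q)"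
    using equiv_rel_trans_mem2[OF ea] rcomp_intro[OF bc Rb Rc] by blast+
  then have "mem2 M (fst T \<cdot> q) (snd T \<cdot> q)" using meet_intro[OF M Ra Rbc] by blast
  moreover have "Cod C q = T0" using qy(2) by (simp add: hom_iff)
  ultimately have "mem2 M (fst T) (snd T)" using mem2_descend[OF RM qy(1)] t by simp
  then show ?thesis unfolding rel_le_iff_mem2 .
qed

lemma cond_iii_imp_cond_iv: assumes iii: "cond_iii C" shows "cond_iv C"
  unfolding cond_iv_def distrib_for_def
proof (intro ballI allI impI, elim conjE)
  fix X a b c bc M ab ac R
  assume X: "X \<in> Ob C" and e: "equiv_rel C X a" "equiv_rel C X b" "equiv_rel C X c"
    and rest: "is_rcomp C b c bc" "is_meet C X X a bc M" "is_meet C X X a b ab" "is_meet C X X a c ac"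
      "is_rcomp C ab ac R"
  have "reflexive_rel C X a" "reflexive_rel C X b" "reflexive_rel C X c" using e unfolding equiv_rel_def by auto
  then have "rel_le C M R" using iii X rest unfolding cond_iii_def by blast
  moreover have "is_rel C X X b" "is_rel C X X c" using e reflexive_rel_is_rel unfolding equiv_rel_def by blast+
  ultimately show "rel_le C M R \<and> rel_le C R M" using distrib_ge_equiv_rel[OF e(1) _ _ rest] by blast
qed

lemma cond_iv_imp_cond_v: "cond_iv C \<Longrightarrow> cond_v C"
  unfolding cond_iv_def cond_v_def distrib_for_def effective_equiv_rel_def by blast

subsection \<open>The distributive laws imply majority\<close>

lemma mem3_E: assumes "mem3 C x y z (r1, r2, r3)" "Dom C x = S"
  obtains h where "h \<in> hom C S (Dom C r1)" "r1 \<cdot> h = x" "r2 \<cdot> h = y" "r3 \<cdot> h = z"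
  using assms unfolding mem3_def by auto

lemma rel3_legs: assumes "is_rel3 C X Y Z (r1, r2, r3)"
  shows "r1 \<in> hom C (Dom C r1) X" "r2 \<in> hom C (Dom C r1) Y" "r3 \<in> hom C (Dom C r1) Z"
  using assms unfolding is_rel3_def jmono3_def by (auto simp: hom_iff)

text \<open>In the hypothesis, \<open>h1\<close>, \<open>h2\<close>, \<open>h3\<close> are the elements of the relation witnessing
  \<open>(x, y, z')\<close>, \<open>(x, y', z)\<close> and \<open>(x', y, z)\<close>.\<close>
lemma majority_selecting_by_cover:
  assumes R: "is_rel3 C X Y Z (r1, r2, r3)"
    and cover: "\<And>S h1 h2 h3. h1 \<in> hom C S (Dom C r1) \<Longrightarrow> h2 \<in> hom C S (Dom C r1) \<Longrightarrow>
      h3 \<in> hom C S (Dom C r1) \<Longrightarrow> r1 \<cdot> h1 = r1 \<cdot> h2 \<Longrightarrow> r2 \<cdot> h1 = r2 \<cdot> h3 \<Longrightarrow> r3 \<cdot> h2 = r3 \<cdot> h3 \<Longrightarrow>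
      \<exists>q t. regular_epi C q \<and> Cod C q = S \<and> t \<in> hom C (Dom C q) (Dom C r1) \<and>
        r1 \<cdot> t = (r1 \<cdot> h1) \<cdot> q \<and> r2 \<cdot> t = (r2 \<cdot> h1) \<cdot> q \<and> r3 \<cdot> t = (r3 \<cdot> h2) \<cdot> q"
  shows "majority_selecting C X Y Z (r1, r2, r3)"
  unfolding majority_selecting_def
proof (intro ballI impI, elim conjE)
  fix S x x' y y' z z'
  assume x: "x \<in> hom C S X" and x': "x' \<in> hom C S X" and y: "y \<in> hom C S Y"
    and z: "z \<in> hom C S Z" and m1: "mem3 C x y z' (r1, r2, r3)"
    and m2: "mem3 C x y' z (r1, r2, r3)" and m3: "mem3 C x' y z (r1, r2, r3)"
  have dx: "Dom C x = S" "Dom C x' = S" using x x' by (auto simp: hom_iff)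
  obtain h1 where h1: "h1 \<in> hom C S (Dom C r1)" "r1 \<cdot> h1 = x" "r2 \<cdot> h1 = y" "r3 \<cdot> h1 = z'"
    using mem3_E[OF m1 dx(1)] by metis
  obtain h2 where h2: "h2 \<in> hom C S (Dom C r1)" "r1 \<cdot> h2 = x" "r2 \<cdot> h2 = y'" "r3 \<cdot> h2 = z"
    using mem3_E[OF m2 dx(1)] by metis
  obtain h3 where h3: "h3 \<in> hom C S (Dom C r1)" "r1 \<cdot> h3 = x'" "r2 \<cdot> h3 = y" "r3 \<cdot> h3 = z"
    using mem3_E[OF m3 dx(2)] by metis
  obtain q t where "regular_epi C q" "Cod C q = S" "t \<in> hom C (Dom C q) (Dom C r1)"
      "r1 \<cdot> t = x \<cdot> q" "r2 \<cdot> t = y \<cdot> q" "r3 \<cdot> t = z \<cdot> q"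
    using cover[OF h1(1) h2(1) h3(1)] h1 h2 h3 by auto
  then show "mem3 C x y z (r1, r2, r3)" using mem3_descend[OF R] x y z by simp
qed

lemma majority_category_by_kernel_pairs:
  assumes "\<And>X Y Z r1 r2 r3 a1 a2 b1 b2 c1 c2. is_rel3 C X Y Z (r1, r2, r3) \<Longrightarrow>
      is_pullback C r1 r1 a1 a2 \<Longrightarrow> is_pullback C r2 r2 b1 b2 \<Longrightarrow> is_pullback C r3 r3 c1 c2 \<Longrightarrow>
      majority_selecting C X Y Z (r1, r2, r3)"
  shows "majority_category C"
  unfolding majority_category_def
proof (intro ballI allI impI)
  fix X Y Z R assume R: "is_rel3 C X Y Z R"
  obtain r1 r2 r3 where R': "R = (r1, r2, r3)" by (cases R) auto
  have "\<exists>a1 a2. is_pullback C r1 r1 a1 a2" "\<exists>b1 b2. is_pullback C r2 r2 b1 b2"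
    "\<exists>c1 c2. is_pullback C r3 r3 c1 c2"
    using pullback_ex rel3_legs[OF R[unfolded R']] by (auto simp: hom_iff)
  then show "majority_selecting C X Y Z R" using assms R unfolding R' by blast
qed

lemma kernel_pairs_comp_meet_majority_selecting:
  assumes R: "is_rel3 C X Y Z (r1, r2, r3)" and Ka: "is_pullback C r1 r1 a1 a2"
    and Kb: "is_pullback C r2 r2 b1 b2" and Kc: "is_pullback C r3 r3 c1 c2"
    and comp_meet: "\<And>AB AC M BC T. is_rcomp C (a1, a2) (b1, b2) AB \<Longrightarrow> is_rcomp C (a1, a2) (c1, c2) AC \<Longrightarrow>
      is_meet C (Dom C r1) (Dom C r1) AB AC M \<Longrightarrow> is_meet C (Dom C r1) (Dom C r1) (b1, b2) (c1, c2) BC \<Longrightarrow>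
      is_rcomp C (a1, a2) BC T \<Longrightarrow> rel_le C M T"
  shows "majority_selecting C X Y Z (r1, r2, r3)"
proof -
  define R0 where "R0 = Dom C r1"
  note legs = rel3_legs[OF R, folded R0_def]
  have Ra: "is_rel C R0 R0 (a1, a2)" and Rb: "is_rel C R0 R0 (b1, b2)" and Rc: "is_rel C R0 R0 (c1, c2)"
    using kernel_pair_rel Ka Kb Kc legs by blast+
  obtain AB where AB: "is_rcomp C (a1, a2) (b1, b2) AB" using rcomp_ex[OF Ra Rb] by blast
  obtain AC where AC: "is_rcomp C (a1, a2) (c1, c2) AC" using rcomp_ex[OF Ra Rc] by blast
  have RAB: "is_rel C R0 R0 AB" and RAC: "is_rel C R0 R0 AC"
    using rcomp_rel[OF AB Ra Rb] rcomp_rel[OF AC Ra Rc] .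
  obtain M where M: "is_meet C R0 R0 AB AC M" using meet_ex[OF RAB RAC] by blast
  obtain BC where BC: "is_meet C R0 R0 (b1, b2) (c1, c2) BC" using meet_ex[OF Rb Rc] by blast
  have RBC: "is_rel C R0 R0 BC" using meet_is_rel[OF BC] .
  obtain T where T: "is_rcomp C (a1, a2) BC T" using rcomp_ex[OF Ra RBC] by blast
  have MT: "rel_le C M T" using comp_meet AB AC M BC T unfolding R0_def by blast
  show ?thesis
  proof (rule majority_selecting_by_cover[OF R], fold R0_def)
    fix S h1 h2 h3 assume h: "h1 \<in> hom C S R0" "h2 \<in> hom C S R0" "h3 \<in> hom C S R0"
      and e: "r1 \<cdot> h1 = r1 \<cdot> h2" "r2 \<cdot> h1 = r2 \<cdot> h3" "r3 \<cdot> h2 = r3 \<cdot> h3"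
    have "mem2 (a1, a2) h1 h1" "mem2 (b1, b2) h1 h3" "mem2 (a1, a2) h1 h2" "mem2 (c1, c2) h2 h3"
      using kernel_pair_mem[OF Ka legs(1)] kernel_pair_mem[OF Kb legs(2)] kernel_pair_mem[OF Kc legs(3)]
        h e by simp_all
    then have "mem2 M h1 h3"
      using meet_intro[OF M RAB RAC] rcomp_intro[OF AB Ra Rb] rcomp_intro[OF AC Ra Rc] by blast
    then have "mem2 T h1 h3" using mem2_rel_le[OF meet_is_rel[OF M] rcomp_rel[OF T Ra RBC] MT] by blast
    then obtain q t where qt: "regular_epi C q" "q \<in> hom C (Dom C q) S" "mem2 (a1, a2) (h1 \<cdot> q) t"
        "mem2 BC t (h3 \<cdot> q)"
      using rcomp_elim[OF T Ra RBC _ h(1)] by blast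
    have hq: "h1 \<cdot> q \<in> hom C (Dom C q) R0" "h3 \<cdot> q \<in> hom C (Dom C q) R0" using h qt(2) by auto
    then have t: "t \<in> hom C (Dom C q) R0" using mem2_hom(2)[OF Ra qt(3)] by (simp add: hom_iff)
    have "mem2 (b1, b2) t (h3 \<cdot> q)" "mem2 (c1, c2) t (h3 \<cdot> q)" using meet_elim[OF BC Rb Rc qt(4)] by auto
    then have "r1 \<cdot> t = r1 \<cdot> (h1 \<cdot> q)" "r2 \<cdot> t = r2 \<cdot> (h3 \<cdot> q)" "r3 \<cdot> t = r3 \<cdot> (h3 \<cdot> q)"
      using kernel_pair_mem[OF Ka legs(1) hq(1) t] qt(3) kernel_pair_mem[OF Kb legs(2) t hq(2)]
        kernel_pair_mem[OF Kc legs(3) t hq(2)] by auto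
    then show "\<exists>q t. regular_epi C q \<and> Cod C q = S \<and> t \<in> hom C (Dom C q) R0 \<and>
        r1 \<cdot> t = (r1 \<cdot> h1) \<cdot> q \<and> r2 \<cdot> t = (r2 \<cdot> h1) \<cdot> q \<and> r3 \<cdot> t = (r3 \<cdot> h2) \<cdot> q"
      using qt(1,2) t h legs e assoc_hom[OF qt(2)] by (intro exI[of _ q] exI[of _ t]) (auto simp: hom_iff)
  qed
qed

lemma kernel_pairs_meet_comp_majority_selecting:
  assumes R: "is_rel3 C X Y Z (r1, r2, r3)" and Ka: "is_pullback C r1 r1 a1 a2"
    and Kb: "is_pullback C r2 r2 b1 b2" and Kc: "is_pullback C r3 r3 c1 c2"
    and distrib: "\<And>bc M ab ac T. is_rcomp C (b1, b2) (c1, c2) bc \<Longrightarrow>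
      is_meet C (Dom C r1) (Dom C r1) (a1, a2) bc M \<Longrightarrow>
      is_meet C (Dom C r1) (Dom C r1) (a1, a2) (b1, b2) ab \<Longrightarrow>
      is_meet C (Dom C r1) (Dom C r1) (a1, a2) (c1, c2) ac \<Longrightarrow> is_rcomp C ab ac T \<Longrightarrow> rel_le C M T"
  shows "majority_selecting C X Y Z (r1, r2, r3)"
proof -
  define R0 where "R0 = Dom C r1"
  note legs = rel3_legs[OF R, folded R0_def]
  have Ra: "is_rel C R0 R0 (a1, a2)" and Rb: "is_rel C R0 R0 (b1, b2)" and Rc: "is_rel C R0 R0 (c1, c2)"
    using kernel_pair_rel Ka Kb Kc legs by blast+
  obtain bc where bc: "is_rcomp C (b1, b2) (c1, c2) bc" using rcomp_ex[OF Rb Rc] by blast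
  have Rbc: "is_rel C R0 R0 bc" using rcomp_rel[OF bc Rb Rc] .
  obtain M where M: "is_meet C R0 R0 (a1, a2) bc M" using meet_ex[OF Ra Rbc] by blast
  obtain ab where ab: "is_meet C R0 R0 (a1, a2) (b1, b2) ab" using meet_ex[OF Ra Rb] by blast
  obtain ac where ac: "is_meet C R0 R0 (a1, a2) (c1, c2) ac" using meet_ex[OF Ra Rc] by blast
  have Rab: "is_rel C R0 R0 ab" and Rac: "is_rel C R0 R0 ac" using meet_is_rel ab ac by auto
  obtain T where T: "is_rcomp C ab ac T" using rcomp_ex[OF Rab Rac] by blast
  have MT: "rel_le C M T" using distrib bc M ab ac T unfolding R0_def by blast
  show ?thesis
  proof (rule majority_selecting_by_cover[OF R], fold R0_def)
    fix S h1 h2 h3 assume h: "h1 \<in> hom C S R0" "h2 \<in> hom C S R0" "h3 \<in> hom C S R0"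
      and e: "r1 \<cdot> h1 = r1 \<cdot> h2" "r2 \<cdot> h1 = r2 \<cdot> h3" "r3 \<cdot> h2 = r3 \<cdot> h3"
    have "mem2 (a1, a2) h1 h2" "mem2 (b1, b2) h1 h3" "mem2 (c1, c2) h3 h2"
      using kernel_pair_mem[OF Ka legs(1)] kernel_pair_mem[OF Kb legs(2)] kernel_pair_mem[OF Kc legs(3)]
        h e by simp_all
    then have "mem2 M h1 h2" using meet_intro[OF M Ra Rbc] rcomp_intro[OF bc Rb Rc] by blast
    then have "mem2 T h1 h2" using mem2_rel_le[OF meet_is_rel[OF M] rcomp_rel[OF T Rab Rac] MT] by blast
    then obtain q t where qt: "regular_epi C q" "q \<in> hom C (Dom C q) S" "mem2 ab (h1 \<cdot> q) t"
        "mem2 ac t (h2 \<cdot> q)"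
      using rcomp_elim[OF T Rab Rac _ h(1)] by blast
    have hq: "h1 \<cdot> q \<in> hom C (Dom C q) R0" "h2 \<cdot> q \<in> hom C (Dom C q) R0" using h qt(2) by auto
    then have t: "t \<in> hom C (Dom C q) R0" using mem2_hom(2)[OF Rab qt(3)] by (simp add: hom_iff)
    have "mem2 (a1, a2) (h1 \<cdot> q) t" "mem2 (b1, b2) (h1 \<cdot> q) t" "mem2 (c1, c2) t (h2 \<cdot> q)"
      using meet_elim[OF ab Ra Rb qt(3)] meet_elim[OF ac Ra Rc qt(4)] by auto
    then have "r1 \<cdot> t = r1 \<cdot> (h1 \<cdot> q)" "r2 \<cdot> t = r2 \<cdot> (h1 \<cdot> q)" "r3 \<cdot> t = r3 \<cdot> (h2 \<cdot> q)"
      using kernel_pair_mem[OF Ka legs(1) hq(1) t] kernel_pair_mem[OF Kb legs(2) hq(1) t]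
        kernel_pair_mem[OF Kc legs(3) t hq(2)] by auto
    then show "\<exists>q t. regular_epi C q \<and> Cod C q = S \<and> t \<in> hom C (Dom C q) R0 \<and>
        r1 \<cdot> t = (r1 \<cdot> h1) \<cdot> q \<and> r2 \<cdot> t = (r2 \<cdot> h1) \<cdot> q \<and> r3 \<cdot> t = (r3 \<cdot> h2) \<cdot> q"
      using qt(1,2) t h legs assoc_hom[OF qt(2)] by (intro exI[of _ q] exI[of _ t]) (auto simp: hom_iff)
  qed
qed

lemma cond_ii_imp_majority_category: assumes "cond_ii C" shows "majority_category C"
proof (rule majority_category_by_kernel_pairs)
  fix X Y Z r1 r2 r3 a1 a2 b1 b2 c1 c2
  assume R: "is_rel3 C X Y Z (r1, r2, r3)" and K: "is_pullback C r1 r1 a1 a2"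
    "is_pullback C r2 r2 b1 b2" "is_pullback C r3 r3 c1 c2"
  note legs = rel3_legs[OF R]
  have "reflexive_rel C (Dom C r1) (a1, a2)" "reflexive_rel C (Dom C r1) (b1, b2)"
    "reflexive_rel C (Dom C r1) (c1, c2)"
    using kernel_pair_reflexive K legs by blast+
  moreover have "Dom C r1 \<in> Ob C" using legs hom_ob by blast
  ultimately show "majority_selecting C X Y Z (r1, r2, r3)"
    using kernel_pairs_comp_meet_majority_selecting[OF R K] assms unfolding cond_ii_def by blast
qed

lemma cond_v_imp_majority_category: assumes "cond_v C" shows "majority_category C"
proof (rule majority_category_by_kernel_pairs)
  fix X Y Z r1 r2 r3 a1 a2 b1 b2 c1 c2
  assume R: "is_rel3 C X Y Z (r1, r2, r3)" and K: "is_pullback C r1 r1 a1 a2"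
    "is_pullback C r2 r2 b1 b2" "is_pullback C r3 r3 c1 c2"
  note legs = rel3_legs[OF R]
  have "effective_equiv_rel C (Dom C r1) (a1, a2)" "effective_equiv_rel C (Dom C r1) (b1, b2)"
    "effective_equiv_rel C (Dom C r1) (c1, c2)"
    using kernel_pair_effective K legs by blast+
  moreover have "Dom C r1 \<in> Ob C" using legs hom_ob by blast
  ultimately show "majority_selecting C X Y Z (r1, r2, r3)"
    using kernel_pairs_meet_comp_majority_selecting[OF R K] assms
    unfolding cond_v_def distrib_for_def by blast
qed

lemma majority_category_iff_conditions:
  "(majority_category C \<longleftrightarrow> cond_ii C) \<and> (majority_category C \<longleftrightarrow> cond_iii C) \<and>
   (majority_category C \<longleftrightarrow> cond_iv C) \<and> (majority_category C \<longleftrightarrow> cond_v C)"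
  using majority_category_imp_cond_ii cond_ii_imp_majority_category majority_category_imp_cond_iii
    cond_iii_imp_cond_iv cond_iv_imp_cond_v cond_v_imp_majority_category by blast

end

theorem theorem3p3:
  fixes C :: "('o, 'a, 'm) cat_scheme"
  assumes "regular_category C"
  shows "(majority_category C \<longleftrightarrow> cond_ii C) \<and>
         (majority_category C \<longleftrightarrow> cond_iii C) \<and>
         (majority_category C \<longleftrightarrow> cond_iv C) \<and>
         (majority_category C \<longleftrightarrow> cond_v C)"
  using regular_cat.majority_category_iff_conditions[OF regular_cat.intro[OF assms]] .

end
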